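(* Let $c\ge 2$ and let $G$ be a $c$-edge-colored graph. Then $G$ is PC acyclic of type 1 if and only if $G$ has no PC cycle.
   Context: A $c$-edge-colored graph is a finite undirected graph in which every edge is assigned a color from $\{1,\dots,c\}$. A walk $W=v_1e_1v_2\dots v_{p-1}e_{p-1}v_p$ is closed if $v_1=v_p$; a cycle is a closed walk in which all vertices other than the first and last are distinct. A walk is properly colored (PC) if $e_i$ and $e_{i+1}$ have different colors for every $i\in\{1,\dots,p-2\}$ and, if the walk is closed, $e_{p-1}$ and $e_1$ also have different colors. An ordering $v_1,\dots,v_n$ of $V(G)$ is of type 1 if for every $i\in[n]$, all edges from $v_i$ to each connected component of $G[\{v_{i+1},\dots,v_n\}]$ have the same color (edges to different components may have different colors). $G$ is PC acyclic of type 1 if it has an ordering of its vertices of type 1. *)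

theory Defs
  imports Main
begin

definition edge_colored_graph ::
  "nat \<Rightarrow> 'a set \<Rightarrow> ('a \<Rightarrow> 'a \<Rightarrow> bool) \<Rightarrow> ('a \<Rightarrow> 'a \<Rightarrow> nat) \<Rightarrow> bool" where
  "edge_colored_graph c V E col \<longleftrightarrow>
     finite V \<and>
     (\<forall>u v. E u v \<longrightarrow> u \<in> V \<and> v \<in> V) \<and>
     (\<forall>u v. E u v \<longrightarrow> E v u) \<and>
     (\<forall>u. \<not> E u u) \<and>
     (\<forall>u v. E u v \<longrightarrow> col u v = col v u) \<and>
     (\<forall>u v. E u v \<longrightarrow> col u v \<in> {1..c})"

definition is_walk :: "('a \<Rightarrow> 'a \<Rightarrow> bool) \<Rightarrow> 'a list \<Rightarrow> bool" where
  "is_walk E vs \<longleftrightarrow> vs \<noteq> [] \<and> (\<forall>i. Suc i < length vs \<longrightarrow> E (vs ! i) (vs ! Suc i))"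

definition is_pc_cycle :: "('a \<Rightarrow> 'a \<Rightarrow> bool) \<Rightarrow> ('a \<Rightarrow> 'a \<Rightarrow> nat) \<Rightarrow> 'a list \<Rightarrow> bool" where
  "is_pc_cycle E col vs \<longleftrightarrow>
     is_walk E vs \<and> length vs \<ge> 4 \<and> hd vs = last vs \<and> distinct (butlast vs) \<and>
     (\<forall>i. i + 2 < length vs \<longrightarrow>
        col (vs ! i) (vs ! Suc i) \<noteq> col (vs ! Suc i) (vs ! Suc (Suc i))) \<and>
     col (vs ! (length vs - 2)) (vs ! (length vs - 1)) \<noteq> col (vs ! 0) (vs ! 1)"

definition has_pc_cycle :: "('a \<Rightarrow> 'a \<Rightarrow> bool) \<Rightarrow> ('a \<Rightarrow> 'a \<Rightarrow> nat) \<Rightarrow> bool" where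
  "has_pc_cycle E col \<longleftrightarrow> (\<exists>vs. is_pc_cycle E col vs)"

definition same_component :: "('a \<Rightarrow> 'a \<Rightarrow> bool) \<Rightarrow> 'a set \<Rightarrow> 'a \<Rightarrow> 'a \<Rightarrow> bool" where
  "same_component E S u w \<longleftrightarrow> u \<in> S \<and> w \<in> S \<and> (\<lambda>x y. E x y \<and> x \<in> S \<and> y \<in> S)\<^sup>*\<^sup>* u w"

definition type1_ordering ::
  "'a set \<Rightarrow> ('a \<Rightarrow> 'a \<Rightarrow> bool) \<Rightarrow> ('a \<Rightarrow> 'a \<Rightarrow> nat) \<Rightarrow> 'a list \<Rightarrow> bool" where
  "type1_ordering V E col vs \<longleftrightarrow>
     distinct vs \<and> set vs = V \<and>
     (\<forall>i < length vs. \<forall>u w.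
        same_component E (set (drop (Suc i) vs)) u w \<longrightarrow>
        E (vs ! i) u \<longrightarrow> E (vs ! i) w \<longrightarrow> col (vs ! i) u = col (vs ! i) w)"

definition pc_acyclic_type1 :: "'a set \<Rightarrow> ('a \<Rightarrow> 'a \<Rightarrow> bool) \<Rightarrow> ('a \<Rightarrow> 'a \<Rightarrow> nat) \<Rightarrow> bool" where
  "pc_acyclic_type1 V E col \<longleftrightarrow> (\<exists>vs. type1_ordering V E col vs)"

end

theory Submission
  imports Defs
begin

text \<open>
  If a graph has a type-1 ordering, it has no PC cycle: at the vertex of a cycle that comes
  first in the ordering, the two cycle edges lead into one component of the graph induced by the
  later vertices (the rest of the cycle lies there), yet they have different colours.

  The converse rests on Yeo's theorem: a nonempty edge-coloured graph without PC cycles has a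
  vertex z such that all edges from z to any one component of G - z have the same colour. Putting
  such a z first and ordering G - z recursively gives a type-1 ordering.

  Yeo's theorem is proved for multigraphs whose edges may carry different colours at their two
  ends, by looking at a counterexample G that is minimal with respect to the number of vertices
  and then of edges. If a vertex set X is attached to the rest of G only through two vertices s
  and v, replacing X by a single new edge s v with suitably chosen end colours gives a smaller
  graph, and a separating vertex of that graph would also separate G. So it has a PC cycle; the
  cycle runs through the new edge and, together with a PC path from s to v through X, yields a
  PC cycle of G. This shows that G is 2-connected, that every vertex has degree at least 3, and
  that deleting any edge u v creates a separating vertex that is u or v. Hence every edge has an
  end at which its colour occurs on no other edge while all other edges there share a single
  colour. A vertex is such an end of at most one edge, so |E| \<le> |V|, contradicting
  2 |E| \<ge> 3 |V|.
\<close>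

section \<open>Edge-coloured multigraphs\<close>

text \<open>
  An edge is a pair of twin darts, one at each end. The colour of a dart is the colour of its
  edge as seen from the tail of the dart, so the two ends of an edge may have different colours.
\<close>
record ('a,'d) multigraph =
  verts :: "'a set"
  darts :: "'d set"
  tail :: "'d \<Rightarrow> 'a"
  twin :: "'d \<Rightarrow> 'd"
  color :: "'d \<Rightarrow> nat"

definition wf_multigraph :: "('a,'d) multigraph \<Rightarrow> bool" where
  "wf_multigraph G \<longleftrightarrow> finite (verts G) \<and> finite (darts G) \<and>
     (\<forall>d\<in>darts G. twin G d \<in> darts G \<and> twin G (twin G d) = d \<and> tail G d \<in> verts G \<and>
        tail G (twin G d) \<noteq> tail G d)"

definition head :: "('a,'d) multigraph \<Rightarrow> 'd \<Rightarrow> 'a" where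
  "head G d = tail G (twin G d)"

definition adj :: "('a,'d) multigraph \<Rightarrow> 'a set \<Rightarrow> 'a \<Rightarrow> 'a \<Rightarrow> bool" where
  "adj G S u w \<longleftrightarrow> u \<in> S \<and> w \<in> S \<and> (\<exists>d\<in>darts G. tail G d = u \<and> head G d = w)"

abbreviation reach :: "('a,'d) multigraph \<Rightarrow> 'a set \<Rightarrow> 'a \<Rightarrow> 'a \<Rightarrow> bool" where
  "reach G S \<equiv> (adj G S)\<^sup>*\<^sup>*"

definition separating :: "('a,'d) multigraph \<Rightarrow> 'a \<Rightarrow> bool" where
  "separating G z \<longleftrightarrow> (\<forall>d1\<in>darts G. \<forall>d2\<in>darts G. tail G d1 = z \<longrightarrow> tail G d2 = z \<longrightarrow>
      reach G (verts G - {z}) (head G d1) (head G d2) \<longrightarrow> color G d1 = color G d2)"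

text \<open>A dart d arrives at its head in the colour color G (twin G d).\<close>
definition pc_step :: "('a,'d) multigraph \<Rightarrow> 'd \<Rightarrow> 'd \<Rightarrow> bool" where
  "pc_step G d e \<longleftrightarrow> head G d = tail G e \<and> color G (twin G d) \<noteq> color G e"

text \<open>The condition on cycles of length 2 forbids running back and forth along one edge, while
  allowing two parallel edges.\<close>
definition pc_cycle :: "('a,'d) multigraph \<Rightarrow> 'd list \<Rightarrow> bool" where
  "pc_cycle G xs \<longleftrightarrow> 2 \<le> length xs \<and> set xs \<subseteq> darts G \<and> distinct (map (tail G) xs) \<and>
     successively (pc_step G) xs \<and> pc_step G (last xs) (hd xs) \<and>
     (length xs = 2 \<longrightarrow> xs ! 1 \<noteq> twin G (xs ! 0))"

definition pc_cycle_free :: "('a,'d) multigraph \<Rightarrow> bool" where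
  "pc_cycle_free G \<longleftrightarrow> (\<nexists>xs. pc_cycle G xs)"

lemma wf_multigraphD:
  assumes "wf_multigraph G" "d \<in> darts G"
  shows "twin G d \<in> darts G" "twin G (twin G d) = d" "tail G d \<in> verts G" "head G d \<noteq> tail G d"
    "head G d \<in> verts G" "head G (twin G d) = tail G d" "tail G (twin G d) = head G d"
  using assms unfolding wf_multigraph_def head_def by auto

lemma adj_sym: "wf_multigraph G \<Longrightarrow> adj G S u w \<Longrightarrow> adj G S w u"
  unfolding adj_def by (metis wf_multigraphD(1,6,7))

lemma reach_sym: assumes "wf_multigraph G" "reach G S u w" shows "reach G S w u"
  using assms(2)
proof (induction rule: rtranclp_induct)
  case (step y z)
  then show ?case using adj_sym[OF assms(1) step(2)]
    by (meson converse_rtranclp_into_rtranclp)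
qed simp

lemma reach_mono_adj:
  assumes "\<And>a b. adj G S a b \<Longrightarrow> adj H T a b" "reach G S u w" shows "reach H T u w"
  using assms(2) by (induction rule: rtranclp_induct)
    (auto intro: rtranclp.rtrancl_into_rtrancl assms(1))

lemma adj_mem: "adj G S u w \<Longrightarrow> u \<in> S \<and> w \<in> S"
  unfolding adj_def by auto

lemma reach_mem: assumes "reach G S u w" "u \<noteq> w" shows "u \<in> S" "w \<in> S"
  using assms by (induction rule: rtranclp_induct) (auto dest: adj_mem)

lemma reach_within_component: assumes "reach G S a b"
  shows "reach G {w \<in> S. reach G S a w} a b"
  using assms
proof (induction rule: rtranclp_induct)
  case (step y z)
  have "adj G {w \<in> S. reach G S a w} y z"
    using step adj_mem[OF step(2)] unfolding adj_def by (auto intro: rtranclp.rtrancl_into_rtrancl)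
  then show ?case using step(3) by (meson rtranclp.rtrancl_into_rtrancl)
qed simp

lemma separatingD:
  "separating G z \<Longrightarrow> d1 \<in> darts G \<Longrightarrow> d2 \<in> darts G \<Longrightarrow> tail G d1 = z \<Longrightarrow> tail G d2 = z \<Longrightarrow>
   reach G (verts G - {z}) (head G d1) (head G d2) \<Longrightarrow> color G d1 = color G d2"
  unfolding separating_def by blast

lemma separating_same_component_colors:
  assumes wf: "wf_multigraph G" and sep: "separating G y"
    and g: "g \<in> darts G" "g' \<in> darts G" "tail G g = y" "tail G g' = y"
    and reach: "reach G (verts G - {y}) w (head G g)" "reach G (verts G - {y}) w (head G g')"
  shows "color G g = color G g'"
proof -
  have "reach G (verts G - {y}) (head G g) (head G g')"
    using reach reach_sym[OF wf] rtranclp_trans by metis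
  then show ?thesis using separatingD[OF sep g] by simp
qed

definition out_darts :: "('a,'d) multigraph \<Rightarrow> 'a \<Rightarrow> 'd set" where
  "out_darts G w = {d \<in> darts G. tail G d = w}"

lemma card_darts_eq_sum_out_darts:
  assumes "wf_multigraph G" shows "card (darts G) = (\<Sum>w\<in>verts G. card (out_darts G w))"
proof -
  have "darts G = (\<Union>w\<in>verts G. out_darts G w)"
    unfolding out_darts_def using wf_multigraphD(3)[OF assms] by auto
  moreover have "card (\<Union>w\<in>verts G. out_darts G w) = (\<Sum>w\<in>verts G. card (out_darts G w))"
    using assms unfolding wf_multigraph_def by (intro card_UN_disjoint) (auto simp: out_darts_def)
  ultimately show ?thesis by simp
qed

section \<open>Properly coloured cycles and paths\<close>

lemma pc_step_reverse:
  assumes "wf_multigraph G" "d \<in> darts G" "e \<in> darts G" "pc_step G d e"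
  shows "pc_step G (twin G e) (twin G d)"
  using assms unfolding pc_step_def by (metis head_def wf_multigraphD(2))

lemma map_head_pc_walk: "successively (pc_step G) xs \<Longrightarrow> xs \<noteq> [] \<Longrightarrow>
   map (head G) xs = tl (map (tail G) xs) @ [head G (last xs)]"
proof (induction xs rule: induct_list012)
  case (3 x y zs)
  then show ?case by (auto simp: pc_step_def)
qed auto

lemma pc_cycle_distinct_heads: assumes "pc_cycle G xs" shows "distinct (map (head G) xs)"
proof -
  have ne: "xs \<noteq> []" using assms unfolding pc_cycle_def by auto
  have "map (head G) xs = tl (map (tail G) xs) @ [tail G (hd xs)]"
    using map_head_pc_walk[of G xs] assms ne unfolding pc_cycle_def pc_step_def by auto
  also have "\<dots> = rotate1 (map (tail G) xs)" using ne by (cases xs) auto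
  finally show ?thesis using assms unfolding pc_cycle_def by simp
qed

lemma pc_cycle_rotate: assumes "wf_multigraph G" "pc_cycle G (xs @ ys)" shows "pc_cycle G (ys @ xs)"
proof (cases "xs = [] \<or> ys = []")
  case True then show ?thesis using assms by auto
next
  case False
  then have ne: "xs \<noteq> []" "ys \<noteq> []" by auto
  have s: "successively (pc_step G) xs" "successively (pc_step G) ys" "pc_step G (last xs) (hd ys)"
    "pc_step G (last ys) (hd xs)"
    using assms(2) ne unfolding pc_cycle_def by (auto simp: successively_append_iff)
  show ?thesis unfolding pc_cycle_def
  proof (intro conjI)
    show "2 \<le> length (ys @ xs)" "set (ys @ xs) \<subseteq> darts G" "distinct (map (tail G) (ys @ xs))"
      using assms(2) unfolding pc_cycle_def by auto
    show "successively (pc_step G) (ys @ xs)" using s ne by (auto simp: successively_append_iff)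
    show "pc_step G (last (ys @ xs)) (hd (ys @ xs))" using s ne by auto
    show "length (ys @ xs) = 2 \<longrightarrow> (ys @ xs) ! 1 \<noteq> twin G ((ys @ xs) ! 0)"
    proof
      assume "length (ys @ xs) = 2"
      then obtain a b where ab: "xs = [a]" "ys = [b]" using ne
        by (cases xs; cases ys) auto
      have "b \<noteq> twin G a" using assms(2) ab unfolding pc_cycle_def by auto
      moreover have "a \<in> darts G" "b \<in> darts G" using assms(2) ab unfolding pc_cycle_def by auto
      ultimately show "(ys @ xs) ! 1 \<noteq> twin G ((ys @ xs) ! 0)"
        using ab wf_multigraphD(2)[OF assms(1)] by force
    qed
  qed
qed

lemma pc_cycle_reverse: assumes "wf_multigraph G" "pc_cycle G xs"
  shows "pc_cycle G (rev (map (twin G) xs))"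
proof -
  have ne: "xs \<noteq> []" and sub: "set xs \<subseteq> darts G" using assms(2) unfolding pc_cycle_def by auto
  have "successively (\<lambda>x y. pc_step G (twin G y) (twin G x)) xs"
    using assms(2) unfolding pc_cycle_def
    by (auto intro!: successively_mono[of "pc_step G" xs] pc_step_reverse[OF assms(1)]
        dest: subsetD[OF sub])
  then have s: "successively (pc_step G) (rev (map (twin G) xs))"
    by (simp add: successively_map)
  have lh: "last xs \<in> darts G" "hd xs \<in> darts G" using sub last_in_set[OF ne] hd_in_set[OF ne]
    by auto
  have "pc_step G (twin G (hd xs)) (twin G (last xs))"
    using pc_step_reverse[OF assms(1) lh] assms(2) unfolding pc_cycle_def by auto
  then have w: "pc_step G (last (rev (map (twin G) xs))) (hd (rev (map (twin G) xs)))"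
    using ne by (simp add: last_rev hd_rev hd_map last_map)
  have d: "distinct (map (tail G) (rev (map (twin G) xs)))"
  proof -
    have e: "map (tail G) (rev (map (twin G) xs)) = rev (map (head G) xs)"
      by (induction xs) (auto simp: head_def)
    show ?thesis unfolding e using pc_cycle_distinct_heads[OF assms(2)] by simp
  qed
  show ?thesis unfolding pc_cycle_def
  proof (intro conjI)
    show "2 \<le> length (rev (map (twin G) xs))" using assms(2) unfolding pc_cycle_def by auto
    show "set (rev (map (twin G) xs)) \<subseteq> darts G" using sub wf_multigraphD(1)[OF assms(1)] by auto
    show "length (rev (map (twin G) xs)) = 2 \<longrightarrow>
        rev (map (twin G) xs) ! 1 \<noteq> twin G (rev (map (twin G) xs) ! 0)"
    proof
      assume "length (rev (map (twin G) xs)) = 2"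
      then obtain a b where ab: "xs = [a, b]"
        by (cases xs; cases "tl xs"; cases "tl (tl xs)") auto
      then have "b \<noteq> twin G a" "a \<in> darts G" "b \<in> darts G" using assms(2) unfolding pc_cycle_def
        by auto
      then show "rev (map (twin G) xs) ! 1 \<noteq> twin G (rev (map (twin G) xs) ! 0)"
        using ab wf_multigraphD(2)[OF assms(1)] by auto
    qed
  qed (use s w d in auto)
qed

lemma pc_cycle_rotate_to: assumes "wf_multigraph G" "pc_cycle G xs" "x \<in> set xs"
  shows "\<exists>R. pc_cycle G (x # R) \<and> set (x # R) = set xs"
proof -
  obtain A B where AB: "xs = A @ x # B" using split_list[OF assms(3)] by auto
  then have "pc_cycle G ((x # B) @ A)" using pc_cycle_rotate[OF assms(1), of A "x # B"] assms(2)
    by simp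
  moreover have "set ((x # B) @ A) = set xs" using AB by auto
  ultimately show ?thesis by (intro exI[of _ "B @ A"]) auto
qed

lemma pc_cycle_transfer:
  assumes "pc_cycle G xs" "set xs \<subseteq> darts H"
    "\<And>d. d \<in> set xs \<Longrightarrow> tail H d = tail G d \<and> head H d = head G d \<and> color H d = color G d \<and>
        twin H d = twin G d \<and> color H (twin G d) = color G (twin G d)"
  shows "pc_cycle H xs"
proof -
  have L: "pc_step H d e \<longleftrightarrow> pc_step G d e" if "d \<in> set xs" "e \<in> set xs" for d e
    using assms(3)[OF that(1)] assms(3)[OF that(2)] unfolding pc_step_def by auto
  have eq: "map (tail H) xs = map (tail G) xs" using assms(3) by auto
  have "distinct (map (tail H) xs)" using assms(1) unfolding eq pc_cycle_def by simp
  moreover have "successively (pc_step H) xs" using assms(1) L unfolding pc_cycle_def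
    by (metis successively_cong)
  moreover have "pc_step H (last xs) (hd xs)" using assms(1) L unfolding pc_cycle_def
    by (metis last_in_set hd_in_set list.size(3) not_numeral_le_zero)
  moreover have "length xs = 2 \<Longrightarrow> xs ! 1 \<noteq> twin H (xs ! 0)"
    using assms(1,3) unfolding pc_cycle_def by (metis nth_mem zero_less_numeral)
  ultimately show ?thesis using assms(1,2) unfolding pc_cycle_def by auto
qed

definition pc_path :: "('a,'d) multigraph \<Rightarrow> 'd list \<Rightarrow> 'a \<Rightarrow> 'a \<Rightarrow> 'a set \<Rightarrow> bool" where
  "pc_path G P s v X \<longleftrightarrow> P \<noteq> [] \<and> set P \<subseteq> darts G \<and> successively (pc_step G) P \<and>
     tail G (hd P) = s \<and> head G (last P) = v \<and> distinct (map (tail G) P) \<and>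
     set (map (tail G) (tl P)) \<subseteq> X"

lemma pc_path_tails: "pc_path G P s v X \<Longrightarrow> set (map (tail G) P) \<subseteq> insert s X"
  unfolding pc_path_def by (cases P) auto

lemma pc_path_mono: "pc_path G P s v X \<Longrightarrow> X \<subseteq> Y \<Longrightarrow> pc_path G P s v Y"
  unfolding pc_path_def by auto

lemma pc_path_inner:
  assumes "pc_path G P s v X" "2 \<le> length P"
  shows "head G (hd P) \<in> X" "tail G (last P) \<in> X"
proof -
  obtain p1 p2 rest where P: "P = p1 # p2 # rest"
    using assms(2) by (cases P; cases "tl P") auto
  then show "head G (hd P) \<in> X" using assms(1) unfolding pc_path_def pc_step_def by auto
  have "last P \<in> set (tl P)" using P by auto
  then show "tail G (last P) \<in> X" using assms(1) unfolding pc_path_def by auto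
qed

lemma pc_cycle_append:
  assumes P: "pc_path G P s v X" "2 \<le> length P" and R: "pc_path G R v s Y"
    and disjoint: "X \<inter> Y = {}" "s \<notin> Y" "v \<notin> X" "s \<noteq> v"
    and "pc_step G (last P) (hd R)" "pc_step G (last R) (hd P)"
  shows "pc_cycle G (P @ R)"
proof -
  have "set (map (tail G) P) \<inter> set (map (tail G) R) = {}"
    using pc_path_tails[OF P(1)] pc_path_tails[OF R] disjoint by blast
  then have "distinct (map (tail G) (P @ R))" using P(1) R unfolding pc_path_def by simp
  moreover have "3 \<le> length (P @ R)" using P(2) R unfolding pc_path_def by (cases R) auto
  ultimately show ?thesis using assms unfolding pc_cycle_def pc_path_def
    by (auto simp: successively_append_iff)
qed

lemma pc_cycle_parallel_edges:
  assumes wf: "wf_multigraph G"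
    and pq: "p \<in> darts G" "q \<in> darts G" "tail G p = tail G q" "head G p = head G q"
    and colors: "color G p \<noteq> color G q" "color G (twin G p) \<noteq> color G (twin G q)"
  shows "pc_cycle G [p, twin G q]"
proof -
  have q: "twin G q \<in> darts G" "tail G (twin G q) = head G p" "head G (twin G q) = tail G p"
    "twin G (twin G q) = q"
    using wf_multigraphD(1,2,6,7)[OF wf pq(2)] pq(3,4) by auto
  moreover have "twin G q \<noteq> twin G p" using colors(1) wf_multigraphD(2)[OF wf] pq(1,2) by metis
  moreover have "head G p \<noteq> tail G p" using wf_multigraphD(4)[OF wf pq(1)] .
  ultimately show ?thesis using pq(1) colors unfolding pc_cycle_def pc_step_def by auto
qed

section \<open>Subgraphs and new edges\<close>

definition induced :: "('a,'d) multigraph \<Rightarrow> 'a set \<Rightarrow> ('a,'d) multigraph" where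
  "induced G W = G\<lparr>verts := W, darts := {d \<in> darts G. tail G d \<in> W \<and> head G d \<in> W}\<rparr>"

definition delete_edge :: "('a,'d) multigraph \<Rightarrow> 'd \<Rightarrow> ('a,'d) multigraph" where
  "delete_edge G d = G\<lparr>darts := darts G - {d, twin G d}\<rparr>"

definition add_edge ::
  "('a,'d) multigraph \<Rightarrow> 'd \<Rightarrow> 'd \<Rightarrow> 'a \<Rightarrow> 'a \<Rightarrow> nat \<Rightarrow> nat \<Rightarrow> ('a,'d) multigraph" where
  "add_edge G x y s v a b = G\<lparr>darts := darts G \<union> {x, y}, tail := (tail G)(x := s, y := v),
      twin := (twin G)(x := y, y := x), color := (color G)(x := a, y := b)\<rparr>"

definition replace_by_edge ::
  "('a,'d) multigraph \<Rightarrow> 'a set \<Rightarrow> 'd \<Rightarrow> 'd \<Rightarrow> 'a \<Rightarrow> 'a \<Rightarrow> nat \<Rightarrow> nat \<Rightarrow> ('a,'d) multigraph" where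
  "replace_by_edge G X x y s v a b = add_edge (induced G (verts G - X)) x y s v a b"

lemma induced_simps[simp]:
  "verts (induced G W) = W" "darts (induced G W) = {d \<in> darts G. tail G d \<in> W \<and> head G d \<in> W}"
  "tail (induced G W) = tail G" "twin (induced G W) = twin G" "color (induced G W) = color G"
  "head (induced G W) = head G"
  unfolding induced_def head_def by auto

lemma delete_edge_simps[simp]:
  "verts (delete_edge G d) = verts G" "darts (delete_edge G d) = darts G - {d, twin G d}"
  "tail (delete_edge G d) = tail G" "twin (delete_edge G d) = twin G"
  "color (delete_edge G d) = color G" "head (delete_edge G d) = head G"
  unfolding delete_edge_def head_def by auto

lemma add_edge_simps[simp]: "verts (add_edge G x y s v a b) = verts G"
  "darts (add_edge G x y s v a b) = darts G \<union> {x, y}"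
  "tail (add_edge G x y s v a b) = (tail G)(x := s, y := v)"
  "twin (add_edge G x y s v a b) = (twin G)(x := y, y := x)"
  "color (add_edge G x y s v a b) = (color G)(x := a, y := b)"
  unfolding add_edge_def by auto

lemma wf_induced: assumes "wf_multigraph G" "W \<subseteq> verts G" shows "wf_multigraph (induced G W)"
  using assms finite_subset[OF _ conjunct1[OF assms(1)[unfolded wf_multigraph_def]]]
  unfolding wf_multigraph_def by (auto simp: head_def)

lemma wf_delete_edge: assumes "wf_multigraph G" "d \<in> darts G"
  shows "wf_multigraph (delete_edge G d)"
  using assms unfolding wf_multigraph_def by (auto simp: head_def) metis+

lemma wf_add_edge:
  assumes "wf_multigraph G" "x \<notin> darts G" "y \<notin> darts G" "x \<noteq> y"
    "s \<in> verts G" "v \<in> verts G" "s \<noteq> v"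
  shows "wf_multigraph (add_edge G x y s v a b)"
proof -
  have "twin G e \<noteq> x" "twin G e \<noteq> y" if "e \<in> darts G" for e
    using that assms(1-3) wf_multigraphD(1) by metis+
  then show ?thesis using assms unfolding wf_multigraph_def by auto
qed

lemma add_edge_swap: "x \<noteq> y \<Longrightarrow> add_edge G x y s v a b = add_edge G y x v s b a"
  unfolding add_edge_def by (simp add: fun_upd_twist[of x y] insert_commute)

lemma replace_by_edge_swap:
  "x \<noteq> y \<Longrightarrow> replace_by_edge G X x y s v a b = replace_by_edge G X y x v s b a"
  unfolding replace_by_edge_def by (rule add_edge_swap)

lemma pc_cycle_free_subgraph:
  assumes "pc_cycle_free G" "darts H \<subseteq> darts G"
    "tail H = tail G" "twin H = twin G" "color H = color G"
  shows "pc_cycle_free H"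
  using assms unfolding pc_cycle_free_def pc_cycle_def pc_step_def head_def by auto

lemma delete_edge_twin:
  assumes "wf_multigraph G" "d \<in> darts G" shows "delete_edge G (twin G d) = delete_edge G d"
  unfolding delete_edge_def using wf_multigraphD(2)[OF assms] by (auto simp: insert_commute)

lemma adj_delete_edge:
  assumes "wf_multigraph G" "d \<in> darts G" "tail G d \<notin> S \<or> head G d \<notin> S" "adj G S a b"
  shows "adj (delete_edge G d) S a b"
proof -
  obtain g where g: "g \<in> darts G" "tail G g = a" "head G g = b" "a \<in> S" "b \<in> S"
    using assms(4) unfolding adj_def by auto
  then have "g \<noteq> d" "g \<noteq> twin G d" using assms(3) wf_multigraphD(6,7)[OF assms(1,2)] by auto
  then show ?thesis using g unfolding adj_def by auto
qed

lemma reach_delete_edge: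
  assumes "wf_multigraph G" "d \<in> darts G" "reach G S a w"
  shows "reach (delete_edge G d) S a w \<or> reach (delete_edge G d) S (tail G d) w \<or>
    reach (delete_edge G d) S (head G d) w"
  using assms(3)
proof (induction rule: rtranclp_induct)
  case (step w1 w2)
  obtain g where g: "g \<in> darts G" "tail G g = w1" "head G g = w2" "w1 \<in> S" "w2 \<in> S"
    using step(2) unfolding adj_def by auto
  show ?case
  proof (cases "g = d \<or> g = twin G d")
    case True
    then show ?thesis using g wf_multigraphD(6)[OF assms(1,2)] by auto
  next
    case False
    then have "adj (delete_edge G d) S w1 w2" using g unfolding adj_def by auto
    then show ?thesis using step(3) by (meson rtranclp.rtrancl_into_rtrancl)
  qed
qed simp

section \<open>Replacing a part of a multigraph by a single edge\<close>

definition retains_outside :: "('a,'d) multigraph \<Rightarrow> 'a set \<Rightarrow> ('a,'d) multigraph \<Rightarrow> bool" where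
  "retains_outside G X H \<longleftrightarrow> verts H = verts G - X \<and>
     (\<forall>d\<in>darts G. tail G d \<notin> X \<longrightarrow> head G d \<notin> X \<longrightarrow>
        d \<in> darts H \<and> tail H d = tail G d \<and> head H d = head G d \<and> color H d = color G d)"

lemma retains_outside_induced:
  assumes "wf_multigraph G" shows "retains_outside G X (induced G (verts G - X))"
  using wf_multigraphD(3,5)[OF assms] unfolding retains_outside_def by auto

lemma retains_outside_replace:
  assumes "wf_multigraph G" "x \<notin> darts G" "y \<notin> darts G"
  shows "retains_outside G X (replace_by_edge G X x y s v a b)"
proof -
  have "d \<noteq> x" "d \<noteq> y" "twin G d \<noteq> x" "twin G d \<noteq> y" if "d \<in> darts G" for d
    using that wf_multigraphD(1)[OF assms(1) that] assms(2,3) by auto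
  then show ?thesis using wf_multigraphD(3,5)[OF assms(1)]
    unfolding retains_outside_def replace_by_edge_def by (auto simp: head_def)
qed

lemma adj_retained:
  assumes "retains_outside G X H" "a \<notin> X" "b \<notin> X" "adj G (verts G - {z}) a b"
  shows "adj H (verts H - {z}) a b"
  using assms unfolding retains_outside_def adj_def by fastforce

text \<open>A walk in G - z is followed in H; whenever it enters X, which it can only do through a
  portal in P, it is continued in H from that portal.\<close>
lemma reach_lift:
  assumes wf: "wf_multigraph G"
    and XP: "\<And>d. d \<in> darts G \<Longrightarrow> tail G d \<in> X \<Longrightarrow> head G d \<in> X \<union> P"
    and sub: "\<And>a b. a \<notin> X \<Longrightarrow> b \<notin> X \<Longrightarrow> adj G (verts G - {z}) a b \<Longrightarrow> adj H S a b"
    and portal: "\<And>p q. p \<in> P - {z} \<Longrightarrow> q \<in> P - {z} \<Longrightarrow> reach H S p q"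
    and c: "reach G (verts G - {z}) a w" and a: "a \<notin> X"
  shows "(w \<notin> X \<and> reach H S a w) \<or> (w \<in> X \<and> (\<exists>p\<in>P-{z}. reach H S a p))"
  using c
proof (induction rule: rtranclp_induct)
  case base then show ?case using a by simp
next
  case (step y w')
  obtain g where g: "g \<in> darts G" "tail G g = y" "head G g = w'"
    "y \<in> verts G - {z}" "w' \<in> verts G - {z}"
    using step(2) unfolding adj_def by auto
  show ?case
  proof (cases "w' \<in> X")
    case True
    show ?thesis
    proof (cases "y \<in> X")
      case False
      have "y \<in> P" using XP[OF wf_multigraphD(1)[OF wf g(1)]] wf_multigraphD(6,7)[OF wf g(1)]
          g True False by simp
      then show ?thesis using step(3) False True g(4) by auto
    qed (use step(3) True in auto)
  next
    case False
    show ?thesis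
    proof (cases "y \<in> X")
      case True
      then have "w' \<in> P" using XP[OF g(1)] g False by auto
      obtain p where "p \<in> P - {z}" "reach H S a p" using step(3) True by auto
      then have "reach H S a w'" using portal[of p w'] \<open>w' \<in> P\<close> g(5)
        by (meson DiffD2 DiffI rtranclp_trans)
      then show ?thesis using False by simp
    next
      case yX: False
      have "adj H S y w'" using sub[OF yX False step(2)] .
      then show ?thesis using step(3) yX False by (meson rtranclp.rtrancl_into_rtrancl)
    qed
  qed
qed

lemma separating_lift:
  assumes wf: "wf_multigraph G" and ex: "retains_outside G X H"
    and XP: "\<And>d. d \<in> darts G \<Longrightarrow> tail G d \<in> X \<Longrightarrow> head G d \<in> X \<union> P"
    and portal: "\<And>p q. p \<in> P - {z} \<Longrightarrow> q \<in> P - {z} \<Longrightarrow> reach H (verts H - {z}) p q"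
    and z: "z \<notin> X" "z \<notin> P" and sH: "separating H z"
  shows "separating G z"
  unfolding separating_def
proof (intro ballI impI)
  fix d1 d2 assume d: "d1 \<in> darts G" "d2 \<in> darts G" "tail G d1 = z" "tail G d2 = z"
    and c: "reach G (verts G - {z}) (head G d1) (head G d2)"
  have nX: "head G d1 \<notin> X" "head G d2 \<notin> X"
    using XP[OF wf_multigraphD(1)[OF wf d(1)]] XP[OF wf_multigraphD(1)[OF wf d(2)]] d z
      wf_multigraphD(6,7)[OF wf d(1)] wf_multigraphD(6,7)[OF wf d(2)] by auto
  have "reach H (verts H - {z}) (head G d1) (head G d2)"
    using reach_lift[OF wf XP adj_retained[OF ex] portal c nX(1)] nX(2) by auto
  moreover have "d1 \<in> darts H" "d2 \<in> darts H" "tail H d1 = z" "tail H d2 = z"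
    "head H d1 = head G d1" "head H d2 = head G d2"
    "color H d1 = color G d1" "color H d2 = color G d2"
    using ex d z nX unfolding retains_outside_def by auto
  ultimately show "color G d1 = color G d2" using separatingD[OF sH, of d1 d2] by simp
qed

text \<open>X hangs between s and v, and H replaces it by a new edge with colour a at s and b at v.\<close>
locale replacement =
  fixes G :: "('a,'d) multigraph" and X :: "'a set" and s v :: 'a and a b :: nat and x y :: 'd
  assumes wf: "wf_multigraph G" and Xsub: "X \<subseteq> verts G"
    and sv: "s \<in> verts G" "v \<in> verts G" "s \<notin> X" "v \<notin> X" "s \<noteq> v"
    and hanging: "\<And>d. d \<in> darts G \<Longrightarrow> tail G d \<in> X \<Longrightarrow> head G d \<in> X \<union> {s, v}"
    and fresh: "x \<notin> darts G" "y \<notin> darts G" "x \<noteq> y"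
begin

abbreviation "H \<equiv> replace_by_edge G X x y s v a b"

lemma H_wf: "wf_multigraph H"
  unfolding replace_by_edge_def using sv fresh Xsub
  by (intro wf_add_edge wf_induced wf) auto

lemma H_retains_outside: "retains_outside G X H"
  using retains_outside_replace[OF wf fresh(1,2)] .

lemma H_simps: "verts H = verts G - X" "x \<in> darts H" "y \<in> darts H" "tail H x = s" "tail H y = v"
  "twin H x = y" "twin H y = x" "color H x = a" "color H y = b" "head H x = v" "head H y = s"
  using fresh unfolding replace_by_edge_def head_def by auto

lemma H_old:
  assumes "d \<in> darts H" "d \<noteq> x" "d \<noteq> y"
  shows "d \<in> darts G" "tail H d = tail G d" "head H d = head G d" "twin H d = twin G d"
    "color H d = color G d" "color H (twin H d) = color G (twin G d)" "tail G d \<notin> X" "head G d \<notin> X"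
proof -
  have d: "d \<in> darts G" "tail G d \<in> verts G - X" "head G d \<in> verts G - X"
    using assms unfolding replace_by_edge_def by auto
  have "twin G d \<noteq> x" "twin G d \<noteq> y" using wf_multigraphD(1)[OF wf d(1)] fresh by auto
  then show "d \<in> darts G" "tail H d = tail G d" "head H d = head G d" "twin H d = twin G d"
    "color H d = color G d" "color H (twin H d) = color G (twin G d)" "tail G d \<notin> X" "head G d \<notin> X"
    using d assms unfolding replace_by_edge_def head_def by auto
qed

lemma card_verts_H: assumes "X \<noteq> {}" shows "card (verts H) < card (verts G)"
proof -
  have "finite (verts G)" using wf unfolding wf_multigraph_def by auto
  moreover have "verts G - X \<subset> verts G" using assms Xsub by auto
  ultimately show ?thesis unfolding H_simps(1) by (simp add: psubset_card_mono)
qed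

lemma separating_H_other:
  assumes "z \<in> verts H" "z \<noteq> s" "z \<noteq> v" "separating H z" shows "separating G z"
proof (rule separating_lift[OF wf H_retains_outside hanging _ _ _ assms(4)])
  fix p q assume pq: "p \<in> {s, v} - {z}" "q \<in> {s, v} - {z}"
  have "s \<in> verts H - {z}" "v \<in> verts H - {z}" using sv assms H_simps(1) by auto
  then have "adj H (verts H - {z}) s v" using H_simps unfolding adj_def by blast
  then have "reach H (verts H - {z}) s v" "reach H (verts H - {z}) v s"
    using adj_sym[OF H_wf] by blast+
  then show "reach H (verts H - {z}) p q" using pq by auto
qed (use assms H_simps(1) in auto)

text \<open>Seen from s, the new edge stands in for all of X.\<close>
lemma H_reach_minus_s:
  assumes "reach G (verts G - {s}) p w" "p \<notin> X"
  shows "reach H (verts H - {s}) p (if w \<in> X then v else w)"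
proof -
  have "(w \<notin> X \<and> reach H (verts H - {s}) p w) \<or>
      (w \<in> X \<and> (\<exists>q\<in>{s, v} - {s}. reach H (verts H - {s}) p q))"
    by (rule reach_lift[OF wf hanging adj_retained[OF H_retains_outside] _ assms]) auto
  then show ?thesis by auto
qed

lemma separating_H_s:
  assumes colors_s: "\<And>d. d \<in> darts G \<Longrightarrow> tail G d = s \<Longrightarrow> head G d \<in> X \<Longrightarrow> color G d = a"
    and sep: "separating H s"
  shows "separating G s"
  unfolding separating_def
proof (intro ballI impI)
  define rep where "rep d = (if head G d \<in> X then x else d)" for d
  have rep: "rep d \<in> darts H" "tail H (rep d) = s"
    "head H (rep d) = (if head G d \<in> X then v else head G d)"
    "color H (rep d) = color G d" if "d \<in> darts G" "tail G d = s" for d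
    using that colors_s[OF that] H_retains_outside H_simps sv
    unfolding rep_def retains_outside_def by auto
  fix d1 d2 assume d: "d1 \<in> darts G" "d2 \<in> darts G" "tail G d1 = s" "tail G d2 = s"
    and c: "reach G (verts G - {s}) (head G d1) (head G d2)"
  have "reach H (verts H - {s}) (head H (rep d1)) (head H (rep d2))"
  proof (cases "head G d1 \<in> X")
    case True
    show ?thesis
    proof (cases "head G d2 \<in> X")
      case False
      then show ?thesis using reach_sym[OF H_wf H_reach_minus_s[OF reach_sym[OF wf c]]] rep d True
        by simp
    qed (use rep d True in simp)
  qed (use H_reach_minus_s[OF c] rep d in simp)
  then show "color G d1 = color G d2"
    using separatingD[OF sep rep(1)[OF d(1,3)] rep(1)[OF d(2,4)] rep(2)[OF d(1,3)] rep(2)[OF d(2,4)]]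
      rep(4) d
    by simp
qed

lemma H_pc_cycle_old: assumes "pc_cycle H Z" "x \<notin> set Z" "y \<notin> set Z" shows "pc_cycle G Z"
proof (rule pc_cycle_transfer[OF assms(1)])
  have old: "d \<in> darts H" "d \<noteq> x" "d \<noteq> y" if "d \<in> set Z" for d
    using that assms unfolding pc_cycle_def by auto
  then show "set Z \<subseteq> darts G" using H_old(1) by blast
  fix d assume "d \<in> set Z"
  then show "tail G d = tail H d \<and> head G d = head H d \<and> color G d = color H d \<and>
    twin G d = twin H d \<and> color G (twin H d) = color H (twin H d)"
    using H_old[OF old] by simp
qed

lemma H_pc_cycle_through_x:
  assumes "pc_cycle_free G" "pc_cycle H Z"
  obtains R where "pc_cycle H (x # R)"
proof -
  have "\<exists>Z'. pc_cycle H Z' \<and> x \<in> set Z'"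
  proof (cases "x \<in> set Z \<or> y \<in> set Z")
    case True
    moreover have "x \<in> set (rev (map (twin H) Z))" if "y \<in> set Z" using that H_simps(7) by force
    ultimately show ?thesis using assms(2) pc_cycle_reverse[OF H_wf assms(2)] by blast
  qed (use H_pc_cycle_old assms pc_cycle_free_def in blast)
  then show ?thesis using pc_cycle_rotate_to[OF H_wf] that by blast
qed

text \<open>A PC cycle of H has to use the new edge; the rest of it is a PC path of G from v back
  to s that avoids X.\<close>
lemma H_pc_cycle_path:
  assumes "pc_cycle_free G" "pc_cycle H Z"
  obtains R where "pc_path G R v s (verts G - X - {s, v})" "color G (hd R) \<noteq> b"
    "color G (twin G (last R)) \<noteq> a"
proof -
  obtain R where C: "pc_cycle H (x # R)" using H_pc_cycle_through_x[OF assms] .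
  have Rne: "R \<noteq> []" using C unfolding pc_cycle_def by auto
  have RH: "set R \<subseteq> darts H" and dist: "distinct (map (tail H) R)"
    and sR: "s \<notin> tail H ` set R" and walk: "successively (pc_step H) R"
    and first: "pc_step H x (hd R)" and last: "pc_step H (last R) x"
    using C Rne H_simps(4) unfolding pc_cycle_def by (auto simp: successively_Cons)
  have hdR: "tail H (hd R) = v" using first H_simps(10) unfolding pc_step_def by simp
  have "y \<notin> set R"
  proof
    assume "y \<in> set R"
    then have "y = hd R" using dist hdR H_simps(5) hd_in_set[OF Rne] by (metis distinct_map inj_onD)
    then show False using first H_simps(6) unfolding pc_step_def by simp
  qed
  moreover have "x \<notin> set R" using sR H_simps(4) by force
  ultimately have old: "r \<in> darts H" "r \<noteq> x" "r \<noteq> y" if "r \<in> set R" for r using that RH by auto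
  note R_old = H_old[OF old]
  have tails: "map (tail G) R = map (tail H) R" using R_old by simp
  have "successively (pc_step G) R"
    using walk by (rule successively_mono) (use R_old in \<open>simp add: pc_step_def\<close>)
  moreover have "set (map (tail G) (tl R)) \<subseteq> verts G - X - {s, v}"
  proof -
    have "tail H (hd R) \<notin> tail H ` set (tl R)" using dist Rne by (cases R) auto
    then show ?thesis using tails sR hdR R_old(1,7) wf_multigraphD(3)[OF wf] list.set_sel(2)[OF Rne]
      by (fastforce simp: image_iff)
  qed
  moreover have "set R \<subseteq> darts G" "tail G (hd R) = v" using R_old(1,2) Rne hdR by auto
  moreover have "distinct (map (tail G) R)" unfolding tails by (rule dist)
  moreover have "head G (last R) = s" using last R_old(3) Rne H_simps(4) unfolding pc_step_def
    by simp
  ultimately have "pc_path G R v s (verts G - X - {s, v})" unfolding pc_path_def using Rne by blast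
  moreover have "color G (hd R) \<noteq> b" using first R_old Rne H_simps(6,9) unfolding pc_step_def
    by simp
  moreover have "color G (twin G (last R)) \<noteq> a"
    using last R_old Rne H_simps(8) unfolding pc_step_def by simp
  ultimately show ?thesis using that by blast
qed

lemma pc_cycle_free_H:
  assumes colors_s: "\<And>d. d \<in> darts G \<Longrightarrow> tail G d = s \<Longrightarrow> head G d \<in> X \<Longrightarrow> color G d = a"
    and colors_v: "\<And>d. d \<in> darts G \<Longrightarrow> tail G d = v \<Longrightarrow> head G d \<in> X \<Longrightarrow> color G d = b"
    and P: "pc_path G P s v X" "2 \<le> length P" and free: "pc_cycle_free G"
  shows "pc_cycle_free H"
  unfolding pc_cycle_free_def
proof
  assume "\<exists>Z. pc_cycle H Z"
  then obtain R where R: "pc_path G R v s (verts G - X - {s, v})" "color G (hd R) \<noteq> b"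
    "color G (twin G (last R)) \<noteq> a"
    using H_pc_cycle_path[OF free] by blast
  have P_ends: "hd P \<in> darts G" "last P \<in> darts G" "tail G (hd P) = s" "head G (last P) = v"
    using P(1) unfolding pc_path_def by auto
  have "color G (twin G (last P)) = b"
    using colors_v wf_multigraphD(1,6,7)[OF wf P_ends(2)] P_ends(4) pc_path_inner[OF P] by simp
  then have "pc_step G (last P) (hd R)" using R P_ends unfolding pc_path_def pc_step_def by simp
  moreover have "pc_step G (last R) (hd P)"
    using R P_ends colors_s[OF P_ends(1,3) pc_path_inner(1)[OF P]] unfolding pc_path_def pc_step_def
    by simp
  ultimately have "pc_cycle G (P @ R)" using pc_cycle_append[OF P R(1)] sv by auto
  then show False using free unfolding pc_cycle_free_def by blast
qed

end

lemma replacement_swap: "replacement G X s v x y \<Longrightarrow> replacement G X v s y x"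
  unfolding replacement_def by (auto simp: insert_commute)

lemma (in replacement) separating_H_v:
  assumes "\<And>d. d \<in> darts G \<Longrightarrow> tail G d = v \<Longrightarrow> head G d \<in> X \<Longrightarrow> color G d = b"
    and "separating H v"
  shows "separating G v"
proof -
  interpret swapped: replacement G X v s b a y x
    by (rule replacement_swap) (rule replacement_axioms)
  have "replace_by_edge G X y x v s b a = H" by (rule replace_by_edge_swap[OF fresh(3), symmetric])
  then show ?thesis using swapped.separating_H_s[OF assms(1)] assms(2) by simp
qed

section \<open>Yeo's theorem\<close>

definition smaller :: "('a,'d) multigraph \<Rightarrow> ('a,'d) multigraph \<Rightarrow> bool" where
  "smaller H G \<longleftrightarrow> card (verts H) < card (verts G) \<or>
     (card (verts H) = card (verts G) \<and> card (darts H) < card (darts G))"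

lemma wf_smaller: "wf {(H :: ('a,'d) multigraph, G). smaller H G}"
proof -
  have "{(H :: ('a,'d) multigraph, G). smaller H G} =
      inv_image (less_than <*lex*> less_than) (\<lambda>G. (card (verts G), card (darts G)))"
    unfolding smaller_def inv_image_def by auto
  then show ?thesis by (simp add: wf_lex_prod)
qed

lemma separating_from_component:
  assumes wf: "wf_multigraph G" and z: "z \<in> verts G"
    and C: "C = {w \<in> verts G - {z}. reach G (verts G - {z}) h w}"
    and y: "y \<in> C" and sep: "separating (induced G (insert z C)) y"
  shows "separating G y"
proof (rule separating_lift[OF wf _ _ _ _ _ sep, where X = "verts G - insert z C" and P = "{z}"])
  have "verts G - (verts G - insert z C) = insert z C" using z C by auto
  then show "retains_outside G (verts G - insert z C) (induced G (insert z C))"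
    using retains_outside_induced[OF wf, of "verts G - insert z C"] by simp
  show "head G d \<in> (verts G - insert z C) \<union> {z}"
    if d: "d \<in> darts G" "tail G d \<in> verts G - insert z C" for d
  proof (rule ccontr)
    assume "head G d \<notin> (verts G - insert z C) \<union> {z}"
    then have hC: "head G d \<in> C" using wf_multigraphD(5)[OF wf d(1)] by auto
    have "adj G (verts G - {z}) (head G d) (tail G d)"
      using hC d C wf_multigraphD(1,6,7)[OF wf d(1)] unfolding adj_def by auto
    then have "tail G d \<in> C" using hC d C by (auto intro: rtranclp.rtrancl_into_rtrancl)
    then show False using d(2) by auto
  qed
qed (use y C in auto)

text \<open>The dart type must be infinite so that fresh darts for replacement edges exist.\<close>
locale minimal_counterexample =
  fixes G :: "('a,'d) multigraph"
  assumes infinite_darts: "infinite (UNIV :: 'd set)"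
    and wf: "wf_multigraph G" and nonempty: "verts G \<noteq> {}" and free: "pc_cycle_free G"
    and no_separating: "\<And>z. z \<in> verts G \<Longrightarrow> \<not> separating G z"
    and minimal: "\<And>H :: ('a,'d) multigraph. smaller H G \<Longrightarrow> wf_multigraph H \<Longrightarrow> verts H \<noteq> {} \<Longrightarrow>
       pc_cycle_free H \<Longrightarrow> \<exists>z\<in>verts H. separating H z"
begin

lemma finite_verts: "finite (verts G)" and finite_darts: "finite (darts G)"
  using wf unfolding wf_multigraph_def by auto

lemma obtain_fresh_darts: obtains x y where "x \<notin> darts G" "y \<notin> darts G" "x \<noteq> y"
proof -
  obtain x where "x \<notin> darts G" using ex_new_if_finite[OF infinite_darts finite_darts] by blast
  moreover obtain y where "y \<notin> insert x (darts G)"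
    using ex_new_if_finite[OF infinite_darts] finite_darts by blast
  ultimately show ?thesis using that by auto
qed

lemma two_colors_at:
  assumes "z \<in> verts G"
  obtains d1 d2 where "d1 \<in> darts G" "d2 \<in> darts G" "tail G d1 = z" "tail G d2 = z"
    "color G d1 \<noteq> color G d2"
  using no_separating[OF assms] unfolding separating_def by blast

lemma replacement_separating_s_or_v:
  assumes r: "replacement G X s v x y" and "X \<noteq> {}"
    and "pc_cycle_free (replace_by_edge G X x y s v a b)"
  obtains "separating (replace_by_edge G X x y s v a b) s"
    | "separating (replace_by_edge G X x y s v a b) v"
proof -
  interpret replacement G X s v a b x y by (rule r)
  have "smaller H G" using card_verts_H[OF assms(2)] unfolding smaller_def by simp
  moreover have "verts H \<noteq> {}" using H_simps(1) sv by auto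
  ultimately obtain z where z: "z \<in> verts H" "separating H z" using minimal H_wf assms(3) by blast
  have "z \<in> verts G" using z(1) H_simps(1) by auto
  then have "z = s \<or> z = v" using separating_H_other[OF z(1) _ _ z(2)] no_separating by blast
  then show ?thesis using z that by blast
qed

lemma replacement_contradiction:
  assumes X: "X \<subseteq> verts G" "X \<noteq> {}"
    and sv: "s \<in> verts G" "v \<in> verts G" "s \<notin> X" "v \<notin> X" "s \<noteq> v"
    and hanging: "\<And>d. d \<in> darts G \<Longrightarrow> tail G d \<in> X \<Longrightarrow> head G d \<in> X \<union> {s, v}"
    and colors_s: "\<And>d. d \<in> darts G \<Longrightarrow> tail G d = s \<Longrightarrow> head G d \<in> X \<Longrightarrow> color G d = a"
    and colors_v: "\<And>d. d \<in> darts G \<Longrightarrow> tail G d = v \<Longrightarrow> head G d \<in> X \<Longrightarrow> color G d = b"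
    and P: "pc_path G P s v X" "2 \<le> length P"
  shows False
proof -
  obtain x y where xy: "x \<notin> darts G" "y \<notin> darts G" "x \<noteq> y" by (rule obtain_fresh_darts)
  interpret r: replacement G X s v a b x y
    by unfold_locales (use wf X sv hanging xy in auto)
  have "pc_cycle_free r.H" by (rule r.pc_cycle_free_H[OF colors_s colors_v P free])
  then show False
    using r.separating_H_s[OF colors_s] r.separating_H_v[OF colors_v] no_separating sv
    by (cases rule: replacement_separating_s_or_v[OF r.replacement_axioms X(2)]) auto
qed

lemma separating_in_induced:
  assumes "W \<subset> verts G" "W \<noteq> {}"
  obtains y where "y \<in> W" "separating (induced G W) y"
proof -
  have "smaller (induced G W) G"
    unfolding smaller_def using psubset_card_mono[OF finite_verts assms(1)] by simp
  moreover have "wf_multigraph (induced G W)" using assms(1) by (intro wf_induced wf) auto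
  moreover have "pc_cycle_free (induced G W)" by (rule pc_cycle_free_subgraph[OF free]) auto
  ultimately have "\<exists>y\<in>W. separating (induced G W) y" using minimal[of "induced G W"] assms(2)
    by simp
  then show ?thesis using that by blast
qed

lemma reach_minus_vertex:
  assumes z: "z \<in> verts G" and w: "w \<in> verts G" "w \<noteq> z" and w': "w' \<in> verts G" "w' \<noteq> z"
  shows "reach G (verts G - {z}) w w'"
proof -
  obtain d1 d2 where d: "d1 \<in> darts G" "d2 \<in> darts G" "tail G d1 = z" "tail G d2 = z"
    and colors: "color G d1 \<noteq> color G d2" and c12: "reach G (verts G - {z}) (head G d1) (head G d2)"
    using no_separating[OF z] unfolding separating_def by blast
  define C where "C = {w \<in> verts G - {z}. reach G (verts G - {z}) (head G d1) w}"
  have C_sub: "C \<subseteq> verts G - {z}" unfolding C_def by auto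
  have heads: "head G d1 \<in> C" "head G d2 \<in> C"
    using wf_multigraphD(4,5)[OF wf d(1)] wf_multigraphD(4,5)[OF wf d(2)] d c12 unfolding C_def
      by auto
  have "verts G - {z} \<subseteq> C"
  proof (rule ccontr)
    assume "\<not> verts G - {z} \<subseteq> C"
    then have W: "insert z C \<subset> verts G" using z C_sub by auto
    define H where "H = induced G (insert z C)"
    obtain y where y: "y \<in> insert z C" "separating H y"
      using separating_in_induced[OF W] unfolding H_def by blast
    have "y \<noteq> z"
    proof
      assume "y = z"
      have "reach G C (head G d1) (head G d2)" using reach_within_component[OF c12] unfolding C_def
        by simp
      then have "reach H (verts H - {z}) (head G d1) (head G d2)"
        by (rule reach_mono_adj[rotated]) (use C_sub in \<open>auto simp: adj_def H_def\<close>)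
      moreover have "d1 \<in> darts H" "d2 \<in> darts H" "tail H d1 = z" "tail H d2 = z"
        "head H d1 = head G d1" "head H d2 = head G d2"
        using heads d unfolding H_def by auto
      ultimately have "color H d1 = color H d2"
        using separatingD[OF y(2)[unfolded \<open>y = z\<close>], of d1 d2] by metis
      then show False using colors unfolding H_def by simp
    qed
    then have yC: "y \<in> C" using y(1) by simp
    then have "separating G y" using separating_from_component[OF wf z C_def _ y(2)[unfolded H_def]]
      by simp
    then show False using no_separating yC C_sub by blast
  qed
  then have "reach G (verts G - {z}) (head G d1) w" "reach G (verts G - {z}) (head G d1) w'"
    using w w' unfolding C_def by auto
  then show ?thesis using reach_sym[OF wf] by (meson rtranclp_trans)
qed

text \<open>On two vertices all edges are parallel, and two of them differ in colour at both ends.\<close>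
lemma card_verts_neq_2: "card (verts G) \<noteq> 2"
proof
  assume "card (verts G) = 2"
  then obtain u v where V: "verts G = {u, v}" "u \<noteq> v" by (meson card_2_iff)
  then have uv: "u \<in> verts G" "v \<in> verts G" by auto
  have hvu: "head G d = v" if "d \<in> darts G" "tail G d = u" for d
    using wf_multigraphD(4,5)[OF wf that(1)] that V by auto
  have hvv: "head G d = u" if "d \<in> darts G" "tail G d = v" for d
    using wf_multigraphD(4,5)[OF wf that(1)] that V by auto
  obtain p q where pq: "p \<in> darts G" "q \<in> darts G" "tail G p = u" "tail G q = u"
    "color G p \<noteq> color G q"
    using two_colors_at[OF uv(1)] by blast
  obtain r1 r2 where r: "r1 \<in> darts G" "r2 \<in> darts G" "tail G r1 = v" "tail G r2 = v"
    "color G r1 \<noteq> color G r2"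
    using two_colors_at[OF uv(2)] by blast
  have "\<exists>p' q'. p' \<in> darts G \<and> q' \<in> darts G \<and> tail G p' = u \<and> tail G q' = u \<and>
      color G p' \<noteq> color G q' \<and> color G (twin G p') \<noteq> color G (twin G q')"
  proof (cases "color G (twin G p) \<noteq> color G (twin G q)")
    case True
    then show ?thesis using pq by blast
  next
    case False
    obtain r where rr: "r \<in> darts G" "tail G r = v" "color G r \<noteq> color G (twin G p)" using r
      by metis
    have mr: "twin G r \<in> darts G" "tail G (twin G r) = u" "twin G (twin G r) = r"
      using wf_multigraphD(1,2,7)[OF wf rr(1)] hvv[OF rr(1,2)] by auto
    show ?thesis
    proof (cases "color G (twin G r) \<noteq> color G p")
      case True then show ?thesis using pq mr rr by (intro exI[of _ p] exI[of _ "twin G r"]) auto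
    next
      case False
      then show ?thesis using pq mr rr \<open>\<not> color G (twin G p) \<noteq> color G (twin G q)\<close>
        by (intro exI[of _ q] exI[of _ "twin G r"]) auto
    qed
  qed
  then obtain p' q' where pq': "p' \<in> darts G" "q' \<in> darts G" "tail G p' = u" "tail G q' = u"
    "color G p' \<noteq> color G q'" "color G (twin G p') \<noteq> color G (twin G q')" by blast
  then have "pc_cycle G [p', twin G q']"
    using pc_cycle_parallel_edges[OF wf pq'(1,2) _ _ pq'(5,6)] hvu[OF pq'(1,3)] hvu[OF pq'(2,4)]
      by simp
  then show False using free unfolding pc_cycle_free_def by blast
qed

text \<open>Otherwise u could be replaced by an edge between the heads of its two darts.\<close>
lemma heads_of_degree_two:
  assumes u: "u \<in> verts G" and out: "out_darts G u = {d1, d2}" and colors: "color G d1 \<noteq> color G d2"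
  shows "head G d1 = head G d2"
proof (rule ccontr)
  assume heads: "head G d1 \<noteq> head G d2"
  define s where "s = head G d2"
  define v where "v = head G d1"
  have d: "d1 \<in> darts G" "d2 \<in> darts G" "tail G d1 = u" "tail G d2 = u"
    using out unfolding out_darts_def by auto
  have at_u: "d = d1 \<or> d = d2" if "d \<in> darts G" "tail G d = u" for d
    using out that unfolding out_darts_def by blast
  have into_u: "d = twin G d1 \<or> d = twin G d2" if "d \<in> darts G" "head G d = u" for d
    using at_u[of "twin G d"] wf_multigraphD(1,2,7)[OF wf that(1)] that(2) by metis
  have sv: "s \<in> verts G" "v \<in> verts G" "s \<noteq> u" "v \<noteq> u"
    using wf_multigraphD(4,5)[OF wf d(1)] wf_multigraphD(4,5)[OF wf d(2)] d unfolding s_def v_def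
      by auto
  have twin_d2: "twin G d2 \<in> darts G" "tail G (twin G d2) = s" "head G (twin G d2) = u"
    "twin G (twin G d2) = d2"
    using wf_multigraphD(1,2,6,7)[OF wf d(2)] d(4) unfolding s_def by auto
  show False
  proof (rule replacement_contradiction[of "{u}" s v "color G (twin G d2)" "color G (twin G d1)"
        "[twin G d2, d1]"])
    show "head G d \<in> {u} \<union> {s, v}" if "d \<in> darts G" "tail G d \<in> {u}" for d
      using at_u[of d] that unfolding s_def v_def by auto
    show "color G d = color G (twin G d2)" if "d \<in> darts G" "tail G d = s" "head G d \<in> {u}" for d
      using into_u[OF that(1)] that wf_multigraphD(7)[OF wf d(1)] heads unfolding s_def v_def
        by auto
    show "color G d = color G (twin G d1)" if "d \<in> darts G" "tail G d = v" "head G d \<in> {u}" for d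
      using into_u[OF that(1)] that wf_multigraphD(7)[OF wf d(2)] heads unfolding s_def v_def
        by auto
    show "pc_path G [twin G d2, d1] s v {u}"
      unfolding pc_path_def using twin_d2 d colors sv unfolding pc_step_def v_def by auto
  qed (use u sv heads in \<open>auto simp: s_def v_def\<close>)
qed

lemma degree_ge_3: assumes u: "u \<in> verts G" shows "3 \<le> card (out_darts G u)"
proof (rule ccontr)
  assume small: "\<not> 3 \<le> card (out_darts G u)"
  obtain d1 d2 where d: "d1 \<in> darts G" "d2 \<in> darts G" "tail G d1 = u" "tail G d2 = u"
    and colors: "color G d1 \<noteq> color G d2"
    using two_colors_at[OF u] by blast
  have fin: "finite (out_darts G u)" using finite_darts unfolding out_darts_def by auto
  have sub: "{d1, d2} \<subseteq> out_darts G u" using d unfolding out_darts_def by auto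
  moreover have "card {d1, d2} = 2" using colors by (cases "d1 = d2") auto
  ultimately have "card (out_darts G u) = card {d1, d2}" using card_mono[OF fin sub] small by simp
  then have out: "out_darts G u = {d1, d2}" using card_subset_eq[OF fin sub] by simp
  define v where "v = head G d1"
  have v: "v \<in> verts G" "v \<noteq> u" using wf_multigraphD(4,5)[OF wf d(1)] d unfolding v_def by auto
  have heads: "head G d = v" if "d \<in> darts G" "tail G d = u" for d
    using heads_of_degree_two[OF u out colors] that out unfolding out_darts_def v_def by auto
  have "verts G \<subseteq> {u, v}"
  proof
    fix w assume w: "w \<in> verts G"
    show "w \<in> {u, v}"
    proof (rule ccontr)
      assume "w \<notin> {u, v}"
      then have "reach G (verts G - {v}) u w" "u \<noteq> w" using reach_minus_vertex[OF v(1) u _ w] v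
        by auto
      then obtain w1 where "adj G (verts G - {v}) u w1" by (metis converse_rtranclpE)
      then show False using heads unfolding adj_def by auto
    qed
  qed
  then have "verts G = {u, v}" using u v by auto
  then show False using card_verts_neq_2 v by simp
qed

definition lone_dart :: "'d \<Rightarrow> bool" where
  "lone_dart d \<longleftrightarrow> d \<in> darts G \<and>
     (\<exists>c. c \<noteq> color G d \<and> (\<forall>e\<in>darts G. tail G e = tail G d \<longrightarrow> e \<noteq> d \<longrightarrow> color G e = c))"

lemma separating_after_delete:
  assumes d: "d \<in> darts G"
  obtains y where "y \<in> verts G" "separating (delete_edge G d) y"
proof -
  have "darts (delete_edge G d) \<subset> darts G" using d by auto
  then have "smaller (delete_edge G d) G"
    unfolding smaller_def using psubset_card_mono[OF finite_darts] by simp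
  moreover have "pc_cycle_free (delete_edge G d)" by (rule pc_cycle_free_subgraph[OF free]) auto
  ultimately have "\<exists>y\<in>verts G. separating (delete_edge G d) y"
    using minimal[OF _ wf_delete_edge[OF wf d]] nonempty by simp
  then show ?thesis using that by blast
qed

lemma lone_dart_if_separating:
  assumes d: "d \<in> darts G" and sep: "separating (delete_edge G d) (tail G d)"
  shows "lone_dart d"
proof -
  define u where "u = tail G d"
  have u: "u \<in> verts G" using wf_multigraphD(3)[OF wf d] unfolding u_def .
  have same: "color G e1 = color G e2" if e: "e1 \<in> darts G" "e2 \<in> darts G" "tail G e1 = u"
    "tail G e2 = u" "e1 \<noteq> d" "e2 \<noteq> d" for e1 e2
  proof -
    have "e1 \<noteq> twin G d" "e2 \<noteq> twin G d"
      using e wf_multigraphD(4)[OF wf d] unfolding u_def head_def by auto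
    moreover have "head G e1 \<in> verts G" "head G e1 \<noteq> u" "head G e2 \<in> verts G" "head G e2 \<noteq> u"
      using wf_multigraphD(4,5)[OF wf e(1)] wf_multigraphD(4,5)[OF wf e(2)] e by auto
    then have "reach G (verts G - {u}) (head G e1) (head G e2)" using reach_minus_vertex[OF u]
      by blast
    then have "reach (delete_edge G d) (verts G - {u}) (head G e1) (head G e2)"
      by (rule reach_mono_adj[rotated]) (rule adj_delete_edge[OF wf d], auto simp: u_def)
    ultimately show ?thesis using separatingD[OF sep, of e1 e2] e unfolding u_def by auto
  qed
  obtain e1 e2 where e: "e1 \<in> darts G" "e2 \<in> darts G" "tail G e1 = u" "tail G e2 = u"
    "color G e1 \<noteq> color G e2"
    using two_colors_at[OF u] by blast
  have "\<exists>e. e \<in> darts G \<and> tail G e = u \<and> e \<noteq> d \<and> color G e \<noteq> color G d"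
    using same[OF e(1-4)] e by (cases "e1 = d") auto
  then obtain e where "e \<in> darts G" "tail G e = u" "e \<noteq> d" "color G e \<noteq> color G d" by blast
  then show ?thesis unfolding lone_dart_def using d same unfolding u_def by metis
qed

end

text \<open>After deleting the edge d from u to v, the vertex s separates u from v; it sends colour
  \<alpha> to the side of u and colour \<beta> to the side of v.\<close>
locale edge_split = minimal_counterexample +
  fixes d s and \<alpha> \<beta> :: nat
  assumes dart: "d \<in> darts G" and s: "s \<in> verts G" "s \<noteq> tail G d" "s \<noteq> head G d"
    and sides_apart: "\<not> reach (delete_edge G d) (verts G - {s}) (tail G d) (head G d)"
    and sides_cover: "\<And>w. w \<in> verts G - {s} \<Longrightarrow>
       reach (delete_edge G d) (verts G - {s}) (tail G d) w \<or>
       reach (delete_edge G d) (verts G - {s}) (head G d) w"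
    and colors: "\<alpha> \<noteq> \<beta>"
      "\<And>g. g \<in> darts G \<Longrightarrow> tail G g = s \<Longrightarrow>
         reach (delete_edge G d) (verts G - {s}) (tail G d) (head G g) \<Longrightarrow> color G g = \<alpha>"
      "\<And>g. g \<in> darts G \<Longrightarrow> tail G g = s \<Longrightarrow>
         reach (delete_edge G d) (verts G - {s}) (head G d) (head G g) \<Longrightarrow> color G g = \<beta>"

context minimal_counterexample begin

lemma edge_split_if_separating:
  assumes d: "d \<in> darts G" and y: "y \<in> verts G" "y \<noteq> tail G d" "y \<noteq> head G d"
    and sep: "separating (delete_edge G d) y"
  shows "\<exists>\<alpha> \<beta>. edge_split G d y \<alpha> \<beta>"
proof -
  define S where "S = verts G - {y}"
  define side where "side w = {w'. reach (delete_edge G d) S w w'}" for w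
  have uv: "tail G d \<in> S" "head G d \<in> S" using wf_multigraphD(3,5)[OF wf d] y unfolding S_def
    by auto
  have in_Ge: "h \<in> darts (delete_edge G d)" if "h \<in> darts G" "tail G h = y" for h
    using that y wf_multigraphD(7)[OF wf d] by auto
  have cover: "w \<in> side (tail G d) \<or> w \<in> side (head G d)" if "w \<in> S" for w
    using reach_delete_edge[OF wf d reach_minus_vertex[OF y(1)]] uv that unfolding S_def side_def
    by auto
  obtain d1 d2 where d12: "d1 \<in> darts G" "d2 \<in> darts G" "tail G d1 = y" "tail G d2 = y"
    "color G d1 \<noteq> color G d2"
    using two_colors_at[OF y(1)] by blast
  have heads: "head G d1 \<in> S" "head G d2 \<in> S"
    using wf_multigraphD(4,5)[OF wf d12(1)] wf_multigraphD(4,5)[OF wf d12(2)] d12 unfolding S_def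
      by auto
  have side_colors: "color G g = color G g'" if "g \<in> darts G" "g' \<in> darts G" "tail G g = y"
    "tail G g' = y" "head G g \<in> side w" "head G g' \<in> side w" for g g' w
    using separating_same_component_colors[OF wf_delete_edge[OF wf d] sep in_Ge[OF that(1,3)]
        in_Ge[OF that(2,4)]] that(3-6)
    unfolding side_def S_def by simp
  have apart: "\<not> reach (delete_edge G d) S (tail G d) (head G d)"
  proof
    assume "reach (delete_edge G d) S (tail G d) (head G d)"
    then have "side (head G d) \<subseteq> side (tail G d)" unfolding side_def by (auto intro: rtranclp_trans)
    then show False
      using side_colors[OF d12(1-4), of "tail G d"] cover[OF heads(1)] cover[OF heads(2)]
      d12(5) by auto
  qed
  then have split: "head G d1 \<in> side (tail G d) \<and> head G d2 \<in> side (head G d) \<or>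
      head G d2 \<in> side (tail G d) \<and> head G d1 \<in> side (head G d)"
    using side_colors[OF d12(1-4)] cover[OF heads(1)] cover[OF heads(2)] d12(5) by blast
  have "edge_split G d y (color G d1) (color G d2) \<or> edge_split G d y (color G d2) (color G d1)"
    using split side_colors[OF _ d12(1) _ d12(3)] side_colors[OF _ d12(2) _ d12(4)] d12(5)
      d y apart cover
    unfolding edge_split_def edge_split_axioms_def side_def S_def
    by (auto intro: minimal_counterexample_axioms)
  then show ?thesis by blast
qed

end

context edge_split begin

abbreviation "u \<equiv> tail G d"
abbreviation "v \<equiv> head G d"

definition Ku :: "'a set" where "Ku = {w. reach (delete_edge G d) (verts G - {s}) u w}"
definition Kv :: "'a set" where "Kv = {w. reach (delete_edge G d) (verts G - {s}) v w}"

lemma uv: "u \<in> verts G" "v \<in> verts G" "u \<noteq> v"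
  using wf_multigraphD(3,4,5)[OF wf dart] by auto

lemma sides_subset: "Ku \<subseteq> verts G - {s}" "Kv \<subseteq> verts G - {s}"
  unfolding Ku_def Kv_def using reach_mem(2) uv s by fastforce+

lemma sides_mem: "u \<in> Ku" "v \<in> Kv"
  unfolding Ku_def Kv_def by auto

lemma sides_disjoint: "Ku \<inter> Kv = {}"
  using sides_apart reach_sym[OF wf_delete_edge[OF wf dart]] unfolding Ku_def Kv_def
  by (blast intro: rtranclp_trans)

lemma sides_partition: "verts G - {s} = Ku \<union> Kv"
  using sides_cover sides_subset unfolding Ku_def Kv_def by blast

lemma darts_from_Ku:
  assumes g: "g \<in> darts G" "tail G g \<in> Ku" shows "head G g \<in> Ku \<union> {s} \<or> g = d"
proof (cases "head G g = s \<or> g = d")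
  case False
  have "g \<noteq> twin G d" using g(2) sides_disjoint sides_mem wf_multigraphD(7)[OF wf dart] by auto
  then have "adj (delete_edge G d) (verts G - {s}) (tail G g) (head G g)"
    using g False wf_multigraphD(5)[OF wf g(1)] sides_subset unfolding adj_def by auto
  then show ?thesis using g(2) unfolding Ku_def by (auto intro: rtranclp.rtrancl_into_rtrancl)
qed auto

lemma darts_from_Kv:
  assumes g: "g \<in> darts G" "tail G g \<in> Kv" shows "head G g \<in> Kv \<union> {s} \<or> g = twin G d"
proof (cases "head G g = s \<or> g = twin G d")
  case False
  have "g \<noteq> d" using g(2) sides_disjoint sides_mem by auto
  then have "adj (delete_edge G d) (verts G - {s}) (tail G g) (head G g)"
    using g False wf_multigraphD(5)[OF wf g(1)] sides_subset unfolding adj_def by auto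
  then show ?thesis using g(2) unfolding Kv_def by (auto intro: rtranclp.rtrancl_into_rtrancl)
qed auto

lemma dart_v_to_Ku:
  assumes g: "g \<in> darts G" "tail G g = v" "head G g \<in> Ku" shows "g = twin G d"
proof -
  have "twin G g = d"
    using darts_from_Ku[of "twin G g"] wf_multigraphD(1,6,7)[OF wf g(1)] g
      sides_disjoint sides_mem s
    by auto
  then show ?thesis using wf_multigraphD(2)[OF wf g(1)] by metis
qed

lemma dart_s_to_Ku: obtains g where "g \<in> darts G" "tail G g = s" "head G g \<in> Ku"
proof (rule ccontr)
  assume none: "\<not> thesis"
  obtain e1 e2 where e: "e1 \<in> darts G" "e2 \<in> darts G" "tail G e1 = s" "tail G e2 = s"
    "color G e1 \<noteq> color G e2"
    using two_colors_at[OF s(1)] by blast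
  have "head G e1 \<in> verts G - {s}" "head G e2 \<in> verts G - {s}"
    using wf_multigraphD(4,5)[OF wf e(1)] wf_multigraphD(4,5)[OF wf e(2)] e by auto
  then have "head G e1 \<in> Kv" "head G e2 \<in> Kv" using none that e sides_partition by auto
  then show False using colors(3)[OF e(1,3)] colors(3)[OF e(2,4)] e(5) unfolding Kv_def by simp
qed

lemma reach_Ku: assumes "a \<in> Ku" shows "reach (delete_edge G d) Ku u a"
proof -
  have "{w \<in> verts G - {s}. reach (delete_edge G d) (verts G - {s}) u w} = Ku"
    using sides_subset unfolding Ku_def by auto
  then show ?thesis using reach_within_component[of "delete_edge G d" "verts G - {s}" u a] assms
    unfolding Ku_def by simp
qed

lemma pc_path_if_Ku_singleton:
  assumes "card Ku = 1" shows "\<exists>P. pc_path G P s v Ku \<and> 2 \<le> length P"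
proof -
  have Ku: "Ku = {u}" using assms sides_mem by (metis card_1_singletonE singletonD)
  obtain e1 e2 where "e1 \<in> darts G" "e2 \<in> darts G" "tail G e1 = u" "tail G e2 = u"
    "color G e1 \<noteq> color G e2"
    using two_colors_at[OF uv(1)] by blast
  then obtain g where g: "g \<in> darts G" "tail G g = u" "color G g \<noteq> color G d" by metis
  have "head G g = s" using darts_from_Ku[OF g(1)] g Ku wf_multigraphD(4)[OF wf g(1)] by auto
  then have "twin G g \<in> darts G" "tail G (twin G g) = s" "head G (twin G g) = u"
    "color G (twin G (twin G g)) = color G g"
    using wf_multigraphD(1,2,6,7)[OF wf g(1)] g(2) by auto
  then have "pc_path G [twin G g, d] s v Ku"
    unfolding pc_path_def pc_step_def using dart g s Ku by auto
  then show ?thesis by fastforce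
qed

lemma hanging_Kv:
  assumes "g \<in> darts G" "tail G g \<in> Kv - {v}" shows "head G g \<in> (Kv - {v}) \<union> {s, v}"
  using darts_from_Kv[OF assms(1)] assms(2) wf_multigraphD(7)[OF wf dart] by auto

lemma replacement_Kv:
  assumes "x \<notin> darts G" "y \<notin> darts G" "x \<noteq> y"
  shows "replacement G (Kv - {v}) s v x y"
  by unfold_locales (use wf sides_subset s uv hanging_Kv assms in auto)

lemma reach_Ku_replacement:
  assumes r: "replacement G (Kv - {v}) s v x y" and a: "a \<in> Ku" and z: "z \<notin> Ku"
  shows "reach (replace_by_edge G (Kv - {v}) x y s v a' b')
    (verts (replace_by_edge G (Kv - {v}) x y s v a' b') - {z}) u a"
proof (rule reach_mono_adj[OF _ reach_Ku[OF a]])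
  interpret replacement G "Kv - {v}" s v a' b' x y by (rule r)
  fix p q assume "adj (delete_edge G d) Ku p q"
  then obtain g where "g \<in> darts G" "tail G g = p" "head G g = q" "p \<in> Ku" "q \<in> Ku"
    unfolding adj_def by auto
  then show "adj H (verts H - {z}) p q"
    using H_retains_outside sides_disjoint sides_subset z unfolding retains_outside_def adj_def
      by auto
qed

lemma retained_by_Kv_replacement:
  assumes r: "replacement G (Kv - {v}) s v x y" and g: "g \<in> darts G"
    "tail G g \<in> Ku \<union> {s, v}" "head G g \<in> Ku \<union> {s, v}"
  shows "g \<in> darts (replace_by_edge G (Kv - {v}) x y s v a' b')"
    "tail (replace_by_edge G (Kv - {v}) x y s v a' b') g = tail G g"
    "head (replace_by_edge G (Kv - {v}) x y s v a' b') g = head G g"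
    "color (replace_by_edge G (Kv - {v}) x y s v a' b') g = color G g"
proof -
  interpret replacement G "Kv - {v}" s v a' b' x y by (rule r)
  have "tail G g \<notin> Kv - {v}" "head G g \<notin> Kv - {v}" using g(2,3) sides_disjoint sides_subset by auto
  then show "g \<in> darts H" "tail H g = tail G g" "head H g = head G g" "color H g = color G g"
    using H_retains_outside g(1) unfolding retains_outside_def by auto
qed

text \<open>In H, both colours \<alpha> and \<beta> at s still lead into one component of H - s.\<close>
lemma not_separating_s_Kv_replacement:
  assumes r: "replacement G (Kv - {v}) s v x y"
  shows "\<not> separating (replace_by_edge G (Kv - {v}) x y s v \<beta> b') s"
proof
  interpret replacement G "Kv - {v}" s v \<beta> b' x y by (rule r)
  assume sep: "separating H s"
  obtain g0 where g0: "g0 \<in> darts G" "tail G g0 = s" "head G g0 \<in> Ku" by (rule dart_s_to_Ku)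
  note g0_H = retained_by_Kv_replacement[OF r g0(1), of \<beta> b']
  have "reach H (verts H - {s}) (head G g0) u"
    using reach_sym[OF H_wf reach_Ku_replacement[OF r g0(3)]] sides_subset by auto
  moreover have "adj H (verts H - {s}) u v"
    using retained_by_Kv_replacement[OF r dart, of \<beta> b'] sides_mem sides_subset sides_disjoint s uv
      H_simps(1) unfolding adj_def by auto
  ultimately have "reach H (verts H - {s}) (head H g0) (head H x)"
    using g0_H g0 H_simps(10) by (simp add: rtranclp.rtrancl_into_rtrancl)
  then have "color H g0 = color H x" using separatingD[OF sep _ H_simps(2) _ H_simps(4)] g0_H g0
    by simp
  then show False using g0_H g0 H_simps(8) colors(1,2) unfolding Ku_def by auto
qed

text \<open>The colour of the new edge at v differs from that of d, yet both lead into one component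
  of H - v.\<close>
lemma not_separating_v_Kv_replacement:
  assumes r: "replacement G (Kv - {v}) s v x y"
  shows "\<not> separating (replace_by_edge G (Kv - {v}) x y s v a' (color G (twin G d) + 1)) v"
proof
  interpret replacement G "Kv - {v}" s v a' "color G (twin G d) + 1" x y by (rule r)
  assume sep: "separating H v"
  obtain g0 where g0: "g0 \<in> darts G" "tail G g0 = s" "head G g0 \<in> Ku" by (rule dart_s_to_Ku)
  have twin_d: "twin G d \<in> darts G" "tail G (twin G d) = v" "head G (twin G d) = u"
    using wf_multigraphD(1,6,7)[OF wf dart] by auto
  have twin_g0: "twin G g0 \<in> darts G" "tail G (twin G g0) = head G g0" "head G (twin G g0) = s"
    using wf_multigraphD(1,6,7)[OF wf g0(1)] g0(2) by auto
  note twin_d_H = retained_by_Kv_replacement[OF r twin_d(1), of a' "color G (twin G d) + 1"]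
  note twin_g0_H = retained_by_Kv_replacement[OF r twin_g0(1), of a' "color G (twin G d) + 1"]
  have "reach H (verts H - {v}) u (head G g0)"
    using reach_Ku_replacement[OF r g0(3)] sides_disjoint sides_mem by auto
  moreover have "adj H (verts H - {v}) (head G g0) s"
  proof -
    have "head G g0 \<in> verts H - {v}" "s \<in> verts H - {v}"
      using g0(3) sides_subset sides_disjoint sides_mem s uv H_simps(1) by auto
    then show ?thesis using twin_g0_H twin_g0 g0(3) unfolding adj_def by auto
  qed
  ultimately have "reach H (verts H - {v}) u s" by (rule rtranclp.rtrancl_into_rtrancl)
  then have "reach H (verts H - {v}) (head H (twin G d)) (head H y)"
    using twin_d_H twin_d sides_mem H_simps(11) by simp
  then have "color H (twin G d) = color H y"
    using separatingD[OF sep _ H_simps(3) _ H_simps(5)] twin_d_H twin_d sides_mem by simp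
  then show False using twin_d_H twin_d sides_mem H_simps(9) by simp
qed

lemma pc_cycle_in_Kv_replacement:
  assumes fresh: "x \<notin> darts G" "y \<notin> darts G" "x \<noteq> y" and large: "2 \<le> card Kv"
  shows "\<not> pc_cycle_free (replace_by_edge G (Kv - {v}) x y s v \<beta> (color G (twin G d) + 1))"
proof
  assume "pc_cycle_free (replace_by_edge G (Kv - {v}) x y s v \<beta> (color G (twin G d) + 1))"
  moreover have "Kv - {v} \<noteq> {}"
  proof
    assume "Kv - {v} = {}"
    then have "card Kv \<le> card {v}" by (intro card_mono) auto
    then show False using large by simp
  qed
  ultimately show False
    using not_separating_s_Kv_replacement not_separating_v_Kv_replacement replacement_Kv[OF fresh]
    by (cases rule: replacement_separating_s_or_v[OF replacement_Kv[OF fresh]]) blast+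
qed

lemma pc_path_if_Kv_large:
  assumes "2 \<le> card Kv" shows "\<exists>P. pc_path G P s v Ku \<and> 2 \<le> length P"
proof -
  obtain x y where xy: "x \<notin> darts G" "y \<notin> darts G" "x \<noteq> y" by (rule obtain_fresh_darts)
  interpret r: replacement G "Kv - {v}" v s "color G (twin G d) + 1" \<beta> y x
    by (rule replacement_swap) (rule replacement_Kv[OF xy])
  have "replace_by_edge G (Kv - {v}) x y s v \<beta> (color G (twin G d) + 1) = r.H"
    by (rule replace_by_edge_swap[OF xy(3)])
  then obtain Z where "pc_cycle r.H Z"
    using pc_cycle_in_Kv_replacement[OF xy assms] unfolding pc_cycle_free_def by auto
  then obtain P where P: "pc_path G P s v (verts G - (Kv - {v}) - {v, s})" "color G (hd P) \<noteq> \<beta>"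
    by (rule r.H_pc_cycle_path[OF free])
  have "verts G - (Kv - {v}) - {v, s} \<subseteq> Ku" using sides_partition by auto
  then have "pc_path G P s v Ku" by (rule pc_path_mono[OF P(1)])
  moreover have "2 \<le> length P"
  proof (rule ccontr)
    assume "\<not> 2 \<le> length P"
    then obtain p where "P = [p]" using P(1) unfolding pc_path_def by (cases P; cases "tl P") auto
    then show False using P colors(3)[of p] sides_mem unfolding pc_path_def Kv_def by auto
  qed
  ultimately show ?thesis by blast
qed

lemma contradiction_if_Ku_singleton_or_Kv_large:
  assumes "card Ku = 1 \<or> 2 \<le> card Kv" shows False
proof -
  obtain P where P: "pc_path G P s v Ku" "2 \<le> length P"
    using assms pc_path_if_Ku_singleton pc_path_if_Kv_large by blast
  show False
  proof (rule replacement_contradiction[of Ku s v \<alpha> "color G (twin G d)", OF _ _ _ _ _ _ _ _ _ _ P])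
    show "head G g \<in> Ku \<union> {s, v}" if "g \<in> darts G" "tail G g \<in> Ku" for g
      using darts_from_Ku[OF that] by auto
    show "color G g = \<alpha>" if "g \<in> darts G" "tail G g = s" "head G g \<in> Ku" for g
      using colors(2)[OF that(1,2)] that(3) unfolding Ku_def by simp
    show "color G g = color G (twin G d)" if "g \<in> darts G" "tail G g = v" "head G g \<in> Ku" for g
      using dart_v_to_Ku[OF that] by simp
  qed (use sides_subset sides_mem sides_disjoint s uv in auto)
qed

lemma edge_split_twin: "edge_split G (twin G d) s \<beta> \<alpha>"
  using edge_split_axioms reach_sym[OF wf_delete_edge[OF wf dart]]
    delete_edge_twin[OF wf dart] wf_multigraphD(1,6,7)[OF wf dart]
  unfolding edge_split_def edge_split_axioms_def by auto

lemma contradiction: False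
proof (cases "card Ku = 1 \<or> 2 \<le> card Kv")
  case False
  interpret tw: edge_split G "twin G d" s \<beta> \<alpha> by (rule edge_split_twin)
  have "Kv \<subseteq> verts G" using sides_subset by auto
  then have "card Kv \<ge> 1" using sides_mem finite_verts
    by (metis card_0_eq empty_iff finite_subset less_one not_le)
  then have "card tw.Ku = 1"
    using False delete_edge_twin[OF wf dart] wf_multigraphD(7)[OF wf dart]
    unfolding tw.Ku_def Kv_def by simp
  then show False by (rule tw.contradiction_if_Ku_singleton_or_Kv_large[OF disjI1])
qed (rule contradiction_if_Ku_singleton_or_Kv_large)

end

context minimal_counterexample begin

lemma lone_dart_at_some_end: assumes d: "d \<in> darts G" shows "lone_dart d \<or> lone_dart (twin G d)"
proof -
  obtain y where y: "y \<in> verts G" "separating (delete_edge G d) y"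
    using separating_after_delete[OF d] .
  have twin: "twin G d \<in> darts G" "tail G (twin G d) = head G d"
    using wf_multigraphD(1,7)[OF wf d] by auto
  consider "y = tail G d" | "y = head G d" | "y \<noteq> tail G d" "y \<noteq> head G d" by blast
  then show ?thesis
  proof cases
    case 1 then show ?thesis using lone_dart_if_separating[OF d] y by simp
  next
    case 2 then show ?thesis
      using lone_dart_if_separating[OF twin(1)] y twin(2) delete_edge_twin[OF wf d] by simp
  next
    case 3
    then obtain \<alpha> \<beta> where "edge_split G d y \<alpha> \<beta>" using edge_split_if_separating[OF d y(1) _ _ y(2)]
      by blast
    then have False by (rule edge_split.contradiction)
    then show ?thesis ..
  qed
qed

lemma lone_dart_unique:
  assumes lone: "lone_dart d1" "lone_dart d2" and tails: "tail G d1 = tail G d2" shows "d1 = d2"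
proof (rule ccontr)
  assume "d1 \<noteq> d2"
  define w where "w = tail G d1"
  have "w \<in> verts G" using wf_multigraphD(3)[OF wf] lone(1) unfolding lone_dart_def w_def by auto
  have "\<not> out_darts G w \<subseteq> {d1, d2}"
  proof
    assume "out_darts G w \<subseteq> {d1, d2}"
    then have "card (out_darts G w) \<le> card {d1, d2}" by (intro card_mono) auto
    also have "\<dots> \<le> 2" by (simp add: card_insert_if)
    finally show False using degree_ge_3[OF \<open>w \<in> verts G\<close>] by simp
  qed
  then obtain d3 where d3: "d3 \<in> darts G" "tail G d3 = w" "d3 \<noteq> d1" "d3 \<noteq> d2"
    unfolding out_darts_def by auto
  obtain c1 where c1: "c1 \<noteq> color G d1" "\<forall>e\<in>darts G. tail G e = w \<longrightarrow> e \<noteq> d1 \<longrightarrow> color G e = c1"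
    using lone(1) unfolding lone_dart_def w_def by blast
  obtain c2 where c2: "\<forall>e\<in>darts G. tail G e = w \<longrightarrow> e \<noteq> d2 \<longrightarrow> color G e = c2"
    using lone(2) tails unfolding lone_dart_def w_def by auto
  have "color G d3 = c1" "color G d3 = c2" "color G d1 = c2"
    using c1(2) c2 d3 lone(1) \<open>d1 \<noteq> d2\<close> unfolding lone_dart_def w_def by auto
  then show False using c1(1) by simp
qed

text \<open>Every edge has a lone dart and every vertex carries at most one, so |E| \<le> |V|.\<close>
lemma card_darts_le: "card (darts G) \<le> 2 * card (verts G)"
proof -
  define L where "L = {d \<in> darts G. lone_dart d}"
  have "finite L" using finite_darts unfolding L_def by auto
  have "inj_on (tail G) L" using lone_dart_unique unfolding L_def by (auto intro: inj_onI)
  then have card_L: "card L \<le> card (verts G)"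
    using card_inj_on_le[OF _ _ finite_verts] wf_multigraphD(3)[OF wf] unfolding L_def by auto
  have "darts G \<subseteq> L \<union> twin G ` L"
  proof
    fix d assume d: "d \<in> darts G"
    then show "d \<in> L \<union> twin G ` L"
      using lone_dart_at_some_end[OF d] wf_multigraphD(1,2)[OF wf d] unfolding L_def by force
  qed
  then have "card (darts G) \<le> card (L \<union> twin G ` L)" using \<open>finite L\<close> by (intro card_mono) auto
  also have "\<dots> \<le> card L + card L" using card_Un_le card_image_le[OF \<open>finite L\<close>]
    by (meson add_left_mono le_trans)
  finally show ?thesis using card_L by simp
qed

lemma contradiction: False
proof -
  have "3 * card (verts G) \<le> card (darts G)"
    using sum_mono[of "verts G" "\<lambda>_. 3" "\<lambda>w. card (out_darts G w)"] degree_ge_3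
    card_darts_eq_sum_out_darts[OF wf] by auto
  moreover have "0 < card (verts G)" using finite_verts nonempty by (simp add: card_gt_0_iff)
  ultimately show False using card_darts_le by linarith
qed

end

theorem yeo_theorem:
  fixes G :: "('a,'d) multigraph"
  assumes "infinite (UNIV :: 'd set)" "wf_multigraph G" "verts G \<noteq> {}" "pc_cycle_free G"
  shows "\<exists>z\<in>verts G. separating G z"
  using assms(2-4)
proof (induction G rule: wf_induct[OF wf_smaller])
  case (1 G)
  show ?case
  proof (rule ccontr)
    assume "\<not> (\<exists>z\<in>verts G. separating G z)"
    then interpret minimal_counterexample G by unfold_locales (use assms(1) 1 in auto)
    show False by (rule contradiction)
  qed
qed

section \<open>Orderings of type 1\<close>

lemma reach_pc_walk:
  assumes "successively (pc_step G) R" "R \<noteq> []" "\<And>r. r \<in> set R \<Longrightarrow> tail G r \<in> S"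
    "set R \<subseteq> darts G"
  shows "reach G S (tail G (hd R)) (tail G (last R))"
  using assms
proof (induction R rule: induct_list012)
  case (3 x y zs)
  have "adj G S (tail G x) (tail G y)"
    using "3.prems"(1,3,4) unfolding pc_step_def adj_def by auto
  moreover have "reach G S (tail G y) (tail G (last (y # zs)))"
    using "3.IH"(2) "3.prems" by simp
  ultimately show ?case by (simp add: converse_rtranclp_into_rtranclp)
qed auto

lemma pc_cycle_from_first_vertex:
  assumes wf: "wf_multigraph G" and C: "pc_cycle G xs" and sub: "tail G ` set xs \<subseteq> set vs"
  obtains i d0 R where "i < length vs" "pc_cycle G (d0 # R)" "tail G d0 = vs ! i"
    "\<And>r. r \<in> set R \<Longrightarrow> tail G r \<in> set (drop (Suc i) vs)"
proof -
  define I where "I = {i. i < length vs \<and> vs ! i \<in> tail G ` set xs}"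
  obtain d where "d \<in> set xs" using C unfolding pc_cycle_def by (cases xs) auto
  then obtain j where "j < length vs" "vs ! j = tail G d"
    using sub by (metis image_subset_iff in_set_conv_nth)
  then have "I \<noteq> {}" using \<open>d \<in> set xs\<close> unfolding I_def by auto
  moreover have "finite I" unfolding I_def by auto
  ultimately have i0: "Min I \<in> I" "\<And>j. j \<in> I \<Longrightarrow> Min I \<le> j" by auto
  then obtain d0 where d0: "d0 \<in> set xs" "tail G d0 = vs ! Min I" and "Min I < length vs"
    unfolding I_def by auto
  obtain R where C0: "pc_cycle G (d0 # R)" and set_R: "set (d0 # R) = set xs"
    using pc_cycle_rotate_to[OF wf C d0(1)] by blast
  have "tail G r \<in> set (drop (Suc (Min I)) vs)" if "r \<in> set R" for r
  proof -
    have "tail G r \<in> set vs" using sub set_R that by auto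
    then obtain j where j: "j < length vs" "vs ! j = tail G r" by (metis in_set_conv_nth)
    then have "j \<in> I" using set_R that unfolding I_def by auto
    then have "Min I \<le> j" by (rule i0(2))
    moreover have "tail G d0 \<notin> tail G ` set R" using C0 unfolding pc_cycle_def by auto
    then have "j \<noteq> Min I" using j d0(2) that by auto
    ultimately have "drop (Suc (Min I)) vs ! (j - Suc (Min I)) = tail G r"
      "j - Suc (Min I) < length (drop (Suc (Min I)) vs)" using j by auto
    then show ?thesis by (metis nth_mem)
  qed
  then show ?thesis by (rule that[OF \<open>Min I < length vs\<close> C0 d0(2)])
qed

lemma no_pc_cycle_if_ordered:
  assumes wf: "wf_multigraph G" and C: "pc_cycle G xs" and sub: "tail G ` set xs \<subseteq> set vs"
    and ord: "\<And>i d1 d2. i < length vs \<Longrightarrow> d1 \<in> darts G \<Longrightarrow> d2 \<in> darts G \<Longrightarrow>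
      tail G d1 = vs ! i \<Longrightarrow> tail G d2 = vs ! i \<Longrightarrow>
      reach G (set (drop (Suc i) vs)) (head G d1) (head G d2) \<Longrightarrow> color G d1 = color G d2"
  shows False
proof -
  obtain i d0 R where i: "i < length vs" and C0: "pc_cycle G (d0 # R)" and d0: "tail G d0 = vs ! i"
    and later: "\<And>r. r \<in> set R \<Longrightarrow> tail G r \<in> set (drop (Suc i) vs)"
    using pc_cycle_from_first_vertex[OF wf C sub] by blast
  have "R \<noteq> []" using C0 unfolding pc_cycle_def by auto
  then have R: "R \<noteq> []" "set R \<subseteq> darts G" "d0 \<in> darts G"
    and steps: "successively (pc_step G) R" "pc_step G d0 (hd R)" "pc_step G (last R) d0"
    using C0 unfolding pc_cycle_def by (auto simp: successively_Cons)
  have "reach G (set (drop (Suc i) vs)) (tail G (hd R)) (tail G (last R))"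
    by (rule reach_pc_walk[OF steps(1) R(1) later R(2)])
  moreover have "last R \<in> darts G" using R by auto
  then have "twin G (last R) \<in> darts G" "tail G (twin G (last R)) = vs ! i"
    "head G (twin G (last R)) = tail G (last R)"
    using wf_multigraphD(1,6,7)[OF wf] steps(3) d0 unfolding pc_step_def by auto
  ultimately have "color G d0 = color G (twin G (last R))"
    using ord[OF i R(3) _ d0] steps(2) unfolding pc_step_def by simp
  then show False using steps(3) unfolding pc_step_def by simp
qed

section \<open>Simple graphs as multigraphs\<close>

definition colored_graph :: "'a set \<Rightarrow> ('a \<Rightarrow> 'a \<Rightarrow> bool) \<Rightarrow> ('a \<Rightarrow> 'a \<Rightarrow> nat) \<Rightarrow> bool" where
  "colored_graph V E col \<longleftrightarrow> finite V \<and> (\<forall>u v. E u v \<longrightarrow> u \<in> V \<and> v \<in> V) \<and>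
     (\<forall>u v. E u v \<longrightarrow> E v u) \<and> (\<forall>u. \<not> E u u) \<and> (\<forall>u v. E u v \<longrightarrow> col u v = col v u)"

text \<open>The darts of the edge u v are Inl (u, v) and Inl (v, u); the summand nat only makes the
  dart type infinite, as Yeo's theorem requires.\<close>
definition dart_graph ::
  "'a set \<Rightarrow> ('a \<Rightarrow> 'a \<Rightarrow> bool) \<Rightarrow> ('a \<Rightarrow> 'a \<Rightarrow> nat) \<Rightarrow> ('a, ('a \<times> 'a) + nat) multigraph" where
  "dart_graph V E col = \<lparr>verts = V, darts = Inl ` {(u, v). E u v},
     tail = case_sum fst (\<lambda>_. undefined),
     twin = case_sum (\<lambda>(u, v). Inl (v, u)) Inr, color = case_sum (\<lambda>(u, v). col u v) (\<lambda>_. 0)\<rparr>"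

lemma dart_graph_simps[simp]:
  "verts (dart_graph V E col) = V" "darts (dart_graph V E col) = Inl ` {(u, v). E u v}"
  "tail (dart_graph V E col) (Inl (a, b)) = a" "twin (dart_graph V E col) (Inl (a, b)) = Inl (b, a)"
  "color (dart_graph V E col) (Inl (a, b)) = col a b" "head (dart_graph V E col) (Inl (a, b)) = b"
  unfolding dart_graph_def head_def by auto

lemma wf_dart_graph: assumes "colored_graph V E col" shows "wf_multigraph (dart_graph V E col)"
proof -
  have "{(u, v). E u v} \<subseteq> V \<times> V" using assms unfolding colored_graph_def by auto
  then have "finite {(u, v). E u v}" using assms finite_subset unfolding colored_graph_def by blast
  then show ?thesis using assms unfolding wf_multigraph_def colored_graph_def by auto
qed

lemma reach_dart_graph: "reach (dart_graph V E col) S = (\<lambda>x y. E x y \<and> x \<in> S \<and> y \<in> S)\<^sup>*\<^sup>*"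
proof -
  have "adj (dart_graph V E col) S = (\<lambda>x y. E x y \<and> x \<in> S \<and> y \<in> S)"
    unfolding adj_def by (intro ext) force
  then show ?thesis by simp
qed

lemma pc_step_dart_graph:
  assumes "colored_graph V E col" "E a b"
  shows "pc_step (dart_graph V E col) (Inl (a, b)) (Inl (c, e)) \<longleftrightarrow> b = c \<and> col a b \<noteq> col c e"
  using assms unfolding pc_step_def colored_graph_def by auto

lemma pc_cycle_dart_graph_length:
  assumes C: "pc_cycle (dart_graph V E col) xs" shows "3 \<le> length xs"
proof (rule ccontr)
  assume "\<not> 3 \<le> length xs"
  then obtain p q where xs: "xs = [p, q]" using C unfolding pc_cycle_def
    by (cases xs; cases "tl xs"; cases "tl (tl xs)") auto
  then obtain a b c e where "p = Inl (a, b)" "q = Inl (c, e)" using C unfolding pc_cycle_def by auto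
  then show False using C xs unfolding pc_cycle_def pc_step_def by auto
qed

lemma dart_cycle_nth:
  assumes C: "pc_cycle (dart_graph V E col) xs" and i: "i < length xs"
  defines "ws \<equiv> map (tail (dart_graph V E col)) xs @ [tail (dart_graph V E col) (hd xs)]"
  shows "xs ! i = Inl (ws ! i, ws ! Suc i) \<and> E (ws ! i) (ws ! Suc i)"
proof -
  have "xs ! i \<in> Inl ` {(u, v). E u v}" using C i nth_mem[of i xs] unfolding pc_cycle_def by auto
  then obtain p q where pq: "xs ! i = Inl (p, q)" "E p q" by auto
  have "ws ! i = p" using i pq(1) unfolding ws_def by (simp add: nth_append)
  moreover have "ws ! Suc i = q"
  proof (cases "Suc i < length xs")
    case True
    then have "pc_step (dart_graph V E col) (xs ! i) (xs ! Suc i)"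
      using C successively_nth unfolding pc_cycle_def by blast
    then show ?thesis using True pq unfolding ws_def pc_step_def by (simp add: nth_append)
  next
    case False
    have "xs \<noteq> []" "i = length xs - 1" using False i by auto
    then have "last xs = Inl (p, q)" using pq(1) by (simp add: last_conv_nth)
    moreover have "head (dart_graph V E col) (last xs) = tail (dart_graph V E col) (hd xs)"
      using C unfolding pc_cycle_def pc_step_def by simp
    ultimately show ?thesis using False i unfolding ws_def by (simp add: nth_append)
  qed
  ultimately show ?thesis using pq by simp
qed

lemma is_pc_cycle_of_dart_cycle:
  assumes A: "colored_graph V E col" and C: "pc_cycle (dart_graph V E col) xs"
  defines "ws \<equiv> map (tail (dart_graph V E col)) xs @ [tail (dart_graph V E col) (hd xs)]"
  shows "is_pc_cycle E col ws"
proof -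
  define k where "k = length xs"
  have k: "3 \<le> k" "length ws = Suc k" "xs \<noteq> []"
    using pc_cycle_dart_graph_length[OF C] unfolding k_def ws_def by auto
  note nth = dart_cycle_nth[OF C, folded ws_def k_def]
  have colors: "col (ws ! i) (ws ! Suc i) \<noteq> col (ws ! j) (ws ! Suc j)"
    if "pc_step (dart_graph V E col) (xs ! i) (xs ! j)" "i < k" "j < k" for i j
    using that nth[of i] nth[of j] pc_step_dart_graph[OF A] by metis
  have "col (ws ! i) (ws ! Suc i) \<noteq> col (ws ! Suc i) (ws ! Suc (Suc i))" if "i + 2 < length ws"
    for i
    using colors[of i "Suc i"] C that k successively_nth unfolding pc_cycle_def k_def by auto
  moreover have "pc_step (dart_graph V E col) (xs ! (k - 1)) (xs ! 0)"
    using C k unfolding pc_cycle_def k_def by (simp add: last_conv_nth hd_conv_nth)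
  then have "col (ws ! (length ws - 2)) (ws ! (length ws - 1)) \<noteq> col (ws ! 0) (ws ! 1)"
    using colors[of "k - 1" 0] k by (simp add: numeral_2_eq_2)
  moreover have "hd ws = last ws" "butlast ws = map (tail (dart_graph V E col)) xs"
    using k unfolding ws_def by (auto simp: hd_conv_nth nth_append)
  moreover have "E (ws ! i) (ws ! Suc i)" if "Suc i < length ws" for i using nth[of i] that k
    by simp
  ultimately show ?thesis using C k unfolding is_pc_cycle_def is_walk_def pc_cycle_def by auto
qed

lemma pc_cycle_free_dart_graph:
  assumes "colored_graph V E col" "\<not> has_pc_cycle E col" shows "pc_cycle_free (dart_graph V E col)"
  using is_pc_cycle_of_dart_cycle[OF assms(1)] assms(2) unfolding pc_cycle_free_def has_pc_cycle_def
    by blast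

lemma dart_cycle_of_is_pc_cycle:
  assumes A: "colored_graph V E col" and P: "is_pc_cycle E col ws"
  shows "pc_cycle (dart_graph V E col) (map (\<lambda>i. Inl (ws ! i, ws ! Suc i)) [0..<length ws - 1])"
    (is "pc_cycle ?G ?xs")
proof -
  define k where "k = length ws - 1"
  have k: "3 \<le> k" "length ?xs = k" "Suc k = length ws" using P unfolding is_pc_cycle_def k_def
    by auto
  have xs: "?xs ! i = Inl (ws ! i, ws ! Suc i)" if "i < k" for i using that unfolding k_def by simp
  have walk: "E (ws ! i) (ws ! Suc i)" if "i < k" for i
    using P that unfolding is_pc_cycle_def is_walk_def k_def by auto
  have steps: "pc_step ?G (?xs ! i) (?xs ! Suc i)" if "Suc i < k" for i
  proof -
    have "col (ws ! i) (ws ! Suc i) \<noteq> col (ws ! Suc i) (ws ! Suc (Suc i))"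
      using P that k(3) unfolding is_pc_cycle_def by simp
    then show ?thesis using xs[of i] xs[of "Suc i"] pc_step_dart_graph[OF A walk[of i]] that by simp
  qed
  have "ws \<noteq> []" using k by auto
  then have "ws ! k = ws ! 0" using P unfolding is_pc_cycle_def k_def
    by (metis hd_conv_nth last_conv_nth)
  moreover have "col (ws ! (k - 1)) (ws ! k) \<noteq> col (ws ! 0) (ws ! 1)"
    using P k unfolding is_pc_cycle_def k_def by (simp add: numeral_2_eq_2)
  moreover have "last ?xs = ?xs ! (k - 1)" "hd ?xs = ?xs ! 0"
    using k by (auto simp: last_conv_nth hd_conv_nth)
  ultimately have "pc_step ?G (last ?xs) (hd ?xs)"
    using xs[of "k - 1"] xs[of 0] pc_step_dart_graph[OF A walk[of "k - 1"]] k by simp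
  moreover have "map (tail ?G) ?xs = butlast ws"
    by (rule nth_equalityI) (use k xs in \<open>auto simp: nth_butlast\<close>)
  then have "distinct (map (tail ?G) ?xs)" using P unfolding is_pc_cycle_def by simp
  moreover have "set ?xs \<subseteq> darts ?G" using walk unfolding k_def by auto
  moreover have "successively (pc_step ?G) ?xs" using steps k by (simp add: successively_conv_nth)
  ultimately show ?thesis using k unfolding pc_cycle_def by simp
qed

lemma separating_dart_graph:
  assumes "separating (dart_graph V E col) z" "same_component E (V - {z}) u w" "E z u" "E z w"
  shows "col z u = col z w"
  using assms(1) assms(2-4) separatingD[of "dart_graph V E col" z "Inl (z, u)" "Inl (z, w)"]
  unfolding same_component_def reach_dart_graph by auto

lemma no_pc_cycle_if_type1_ordering:
  assumes A: "colored_graph V E col" and O: "type1_ordering V E col vs"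
  shows "\<not> has_pc_cycle E col"
proof
  assume "has_pc_cycle E col"
  then obtain ws where P: "is_pc_cycle E col ws" unfolding has_pc_cycle_def by blast
  define G where "G = dart_graph V E col"
  show False
  proof (rule no_pc_cycle_if_ordered[OF wf_dart_graph[OF A] dart_cycle_of_is_pc_cycle[OF A P],
        folded G_def])
    show "tail G ` set (map (\<lambda>i. Inl (ws ! i, ws ! Suc i)) [0..<length ws - 1]) \<subseteq> set vs"
    proof
      fix w assume "w \<in> tail G ` set (map (\<lambda>i. Inl (ws ! i, ws ! Suc i)) [0..<length ws - 1])"
      then obtain i where i: "i < length ws - 1" "w = ws ! i" unfolding G_def by auto
      have "E (ws ! i) (ws ! Suc i)" using P i unfolding is_pc_cycle_def is_walk_def by auto
      then show "w \<in> set vs" using A i O unfolding colored_graph_def type1_ordering_def by auto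
    qed
    fix i d1 d2 assume i: "i < length vs" and d: "d1 \<in> darts G" "d2 \<in> darts G"
      "tail G d1 = vs ! i" "tail G d2 = vs ! i"
      and c: "reach G (set (drop (Suc i) vs)) (head G d1) (head G d2)"
    obtain w1 w2 where w: "d1 = Inl (vs ! i, w1)" "d2 = Inl (vs ! i, w2)"
      "E (vs ! i) w1" "E (vs ! i) w2"
      using d unfolding G_def by auto
    have "same_component E (set (drop (Suc i) vs)) w1 w2 \<or> w1 = w2"
      using c w reach_mem[of G "set (drop (Suc i) vs)" w1 w2]
      unfolding G_def same_component_def reach_dart_graph by auto
    then show "color G d1 = color G d2"
      using O i w unfolding G_def type1_ordering_def by auto
  qed
qed

lemma type1_ordering_Cons:
  assumes A: "colored_graph V E col" and z: "z \<in> V" "separating (dart_graph V E col) z"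
    and O: "type1_ordering (V - {z}) (\<lambda>a b. E a b \<and> a \<noteq> z \<and> b \<noteq> z) col vs"
  shows "type1_ordering V E col (z # vs)"
  unfolding type1_ordering_def
proof (intro conjI allI impI)
  show "distinct (z # vs)" "set (z # vs) = V" using O z unfolding type1_ordering_def by auto
  fix i u w assume i: "i < length (z # vs)"
    and sc: "same_component E (set (drop (Suc i) (z # vs))) u w"
    and e: "E ((z # vs) ! i) u" "E ((z # vs) ! i) w"
  show "col ((z # vs) ! i) u = col ((z # vs) ! i) w"
  proof (cases i)
    case 0
    then have "same_component E (V - {z}) u w" "E z u" "E z w"
      using sc e O unfolding type1_ordering_def by simp_all
    then show ?thesis using separating_dart_graph[OF z(2)] 0 by simp
  next
    case (Suc j)
    define S where "S = set (drop (Suc j) vs)"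
    have S: "S \<subseteq> V - {z}" "vs ! j \<in> V - {z}"
      using O i Suc set_drop_subset[of "Suc j" vs] nth_mem[of j vs]
        unfolding S_def type1_ordering_def by auto
    have "(\<lambda>x y. E x y \<and> x \<in> S \<and> y \<in> S) = (\<lambda>x y. (E x y \<and> x \<noteq> z \<and> y \<noteq> z) \<and> x \<in> S \<and> y \<in> S)"
      using S(1) by (intro ext) auto
    moreover have "same_component E S u w" using sc Suc unfolding S_def by simp
    ultimately have "same_component (\<lambda>a b. E a b \<and> a \<noteq> z \<and> b \<noteq> z) S u w"
      unfolding same_component_def by simp
    moreover have "u \<noteq> z" "w \<noteq> z" using calculation S(1) unfolding same_component_def by auto
    moreover have "j < length vs" using i Suc by simp
    ultimately show ?thesis using O e S(2) Suc unfolding type1_ordering_def S_def by auto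
  qed
qed

lemma type1_ordering_if_no_pc_cycle:
  "colored_graph V E col \<Longrightarrow> \<not> has_pc_cycle E col \<Longrightarrow> \<exists>vs. type1_ordering V E col vs"
proof (induction "card V" arbitrary: V E rule: less_induct)
  case less
  show ?case
  proof (cases "V = {}")
    case True
    then have "type1_ordering V E col []" unfolding type1_ordering_def by simp
    then show ?thesis by blast
  next
    case False
    obtain z where z: "z \<in> V" "separating (dart_graph V E col) z"
      using yeo_theorem[OF _ wf_dart_graph[OF less.prems(1)] _
          pc_cycle_free_dart_graph[OF less.prems]]
        False by auto
    define E' where "E' = (\<lambda>a b. E a b \<and> a \<noteq> z \<and> b \<noteq> z)"
    have "colored_graph (V - {z}) E' col" using less.prems(1) unfolding colored_graph_def E'_def
      by auto
    moreover have "\<not> has_pc_cycle E' col"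
      using less.prems(2) unfolding has_pc_cycle_def is_pc_cycle_def is_walk_def E'_def by blast
    moreover have "card (V - {z}) < card V"
      using z(1) less.prems(1) unfolding colored_graph_def by (meson card_Diff1_less)
    ultimately obtain vs where "type1_ordering (V - {z}) E' col vs" using less.hyps by blast
    then show ?thesis using type1_ordering_Cons[OF less.prems(1) z] unfolding E'_def by blast
  qed
qed

theorem corollary1:
  fixes c :: nat and V :: "'a set" and E :: "'a \<Rightarrow> 'a \<Rightarrow> bool" and col :: "'a \<Rightarrow> 'a \<Rightarrow> nat"
  assumes "c \<ge> 2" and "edge_colored_graph c V E col"
  shows "pc_acyclic_type1 V E col \<longleftrightarrow> \<not> has_pc_cycle E col"
proof -
  have "colored_graph V E col"
    using assms(2) unfolding edge_colored_graph_def colored_graph_def by auto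
  then show ?thesis unfolding pc_acyclic_type1_def
    using no_pc_cycle_if_type1_ordering type1_ordering_if_no_pc_cycle by blast
qed

end
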